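(* For every $k,m,r\in\mathbb{N}$ there is $n\in\mathbb{N}$ such that for every $c:M^{\mathrm{ba}}_{n,k}\to r$ there is $R\in M^{\mathrm{oba}}_{n,m}$ such that the color $c(R\cdot B)$ depends only on $\pi(B)$ for $B\in M^{\mathrm{ba}}_{m,k}$; that is, there is $\widehat{c}:\mathcal{S}_k\to r$ with $c(R\cdot B)=\widehat{c}(\pi(B))$ for every $B\in M^{\mathrm{ba}}_{m,k}$.
   Context: $r$ is identified with $\{0,\dots,r-1\}$. $M^{\mathrm{ba}}_{n,k}$ (Boolean matrices) is the set of $n\times k$ matrices with entries in $\{0,1\}$ whose columns, viewed as subsets $P_0,\dots,P_{k-1}$ of $\{0,\dots,n-1\}$, form a partition of $\{0,\dots,n-1\}$ into $k$ (nonempty) pieces. $M^{\mathrm{oba}}_{n,k}$ is the set of those in $M^{\mathrm{ba}}_{n,k}$ with $\min P_i<\min P_{i+1}$ for all $i<k-1$. $\mathcal{S}_k$ is the group of permutations of $k$, identified with $k\times k$ permutation matrices, and $\pi:M^{\mathrm{ba}}_{n,k}\to\mathcal{S}_k$ assigns to $A$ the unique $\pi(A)\in\mathcal{S}_k$ with $A\cdot\pi(A)\in M^{\mathrm{oba}}_{n,k}$. *)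

theory Defs
  imports "HOL-Combinatorics.Permutations" "Jordan_Normal_Form.Matrix"
begin

definition col_set :: "nat mat \<Rightarrow> nat \<Rightarrow> nat set" where
  "col_set A j = {i. i < dim_row A \<and> A $$ (i, j) = 1}"

definition Mba :: "nat \<Rightarrow> nat \<Rightarrow> nat mat set" where
  "Mba n k = {A. A \<in> carrier_mat n k
     \<and> (\<forall>i<n. \<forall>j<k. A $$ (i, j) \<in> {0, 1})
     \<and> (\<forall>j<k. col_set A j \<noteq> {})
     \<and> (\<forall>j<k. \<forall>j'<k. j \<noteq> j' \<longrightarrow> col_set A j \<inter> col_set A j' = {})
     \<and> (\<Union>j<k. col_set A j) = {..<n}}"

definition Moba :: "nat \<Rightarrow> nat \<Rightarrow> nat mat set" where
  "Moba n k = {A \<in> Mba n k. \<forall>i. i + 1 < k \<longrightarrow> Min (col_set A i) < Min (col_set A (i + 1))}"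

definition perm_mat :: "nat \<Rightarrow> (nat \<Rightarrow> nat) \<Rightarrow> nat mat" where
  "perm_mat k p = mat k k (\<lambda>(i, j). if p i = j then 1 else 0)"

definition Sk :: "nat \<Rightarrow> nat mat set" where
  "Sk k = {perm_mat k p | p. p permutes {..<k}}"

definition piM :: "nat mat \<Rightarrow> nat mat" where
  "piM A = (THE P. P \<in> Sk (dim_col A) \<and> A * P \<in> Moba (dim_row A) (dim_col A))"

end

theory Submission
  imports Defs
begin

text \<open>A matrix in \<open>M\<^sup>b\<^sup>a\<^sub>n\<^sub>,\<^sub>k\<close> is the same as a surjection \<open>{..<n} \<rightarrow> {..<k}\<close>, i.e. a word of
  length \<open>n\<close> using every letter below \<open>k\<close>, and it lies in \<open>M\<^sup>o\<^sup>b\<^sup>a\<^sub>n\<^sub>,\<^sub>k\<close> iff the letters occur for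
  the first time in increasing order. These ordered words are the parameter words of Graham and
  Rothschild over the empty alphabet, and the matrix product \<open>R \<cdot> B\<close> is the substitution of \<open>B\<close>
  into \<open>R\<close>. Every \<open>B\<close> is an ordered word followed by the column permutation \<open>\<pi>(B)\<^sup>-\<^sup>1\<close>, so the
  theorem follows from the Graham--Rothschild theorem for parameter words, applied to the colouring
  that records, for a word \<open>w\<close>, the colours of all the matrices \<open>w \<cdot> P\<^sup>T\<close>, \<open>P \<in> S\<^sub>k\<close>.

  Graham--Rothschild is proved by induction on the number \<open>k\<close> of variables of the coloured words.
  For \<open>k = 0\<close> it is the Hales--Jewett theorem for subspaces, which follows from the one-dimensional
  version, proved by colour focusing. In the induction step one first makes the colour of \<open>f \<cdot> g\<close>
  depend only on the constant prefix of \<open>g\<close> before its first variable (by induction on the length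
  of that prefix, treating the prefix letters as extra constants), and then makes the resulting
  colouring of prefixes constant, using a lemma that lets it depend only on the prefix length and
  the pigeonhole principle.\<close>

section \<open>Parameter words\<close>

text \<open>A parameter word of length \<open>n\<close> over the alphabet \<open>{..<t}\<close> with \<open>k\<close> variables is a list over
  \<open>{..<t + k}\<close>: entries below \<open>t\<close> are constants and \<open>t + j\<close> is the \<open>j\<close>-th variable. Every
  variable occurs, and the variables occur for the first time in the order \<open>t, t + 1, \<dots>\<close>.\<close>

definition vars_ordered :: "nat \<Rightarrow> nat list \<Rightarrow> bool" where
  "vars_ordered t w \<longleftrightarrow> (\<forall>i<length w. t < w!i \<longrightarrow> w!i - 1 \<in> set (take i w))"

definition pwords :: "nat \<Rightarrow> nat \<Rightarrow> nat \<Rightarrow> nat list set" where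
  "pwords t n k = {w. length w = n \<and> set w \<subseteq> {..<t+k} \<and> {t..<t+k} \<subseteq> set w \<and> vars_ordered t w}"

definition pcomp :: "nat \<Rightarrow> nat list \<Rightarrow> nat list \<Rightarrow> nat list" where
  "pcomp t f g = map (\<lambda>x. if x < t then x else g ! (x - t)) f"

definition var_word :: "nat \<Rightarrow> nat \<Rightarrow> nat list" where
  "var_word t m = map (\<lambda>j. t + j) [0..<m]"

definition GR :: "nat \<Rightarrow> nat \<Rightarrow> nat \<Rightarrow> nat \<Rightarrow> bool" where
  "GR t k m r \<longleftrightarrow> (\<exists>n. \<forall>\<chi>::nat list \<Rightarrow> nat. (\<forall>w\<in>pwords t n k. \<chi> w < r) \<longrightarrow>
     (\<exists>f\<in>pwords t n m. \<exists>c. \<forall>g\<in>pwords t m k. \<chi> (pcomp t f g) = c))"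

lemma vars_ordered_less:
  assumes "vars_ordered t w" "i < length w" "w!i = t + p" "p' < p"
  shows "t + p' \<in> set (take i w)"
  using assms(2-4)
proof (induction p arbitrary: i)
  case 0 then show ?case by simp
next
  case (Suc p)
  have "t + p \<in> set (take i w)" using assms(1) Suc.prems unfolding vars_ordered_def by force
  then obtain i0 where i0: "i0 < i" "w!i0 = t + p"
    by (auto simp: in_set_conv_nth)
  show ?case
  proof (cases "p' = p")
    case True then show ?thesis using \<open>t + p \<in> set (take i w)\<close> by simp
  next
    case False
    then have "t + p' \<in> set (take i0 w)" using Suc.IH[of i0] i0 Suc.prems by auto
    moreover have "set (take i0 w) \<subseteq> set (take i w)"
      using i0 by (simp add: set_take_subset_set_take)
    ultimately show ?thesis by blast
  qed
qed

lemma vars_ordered_single_var: "set w \<subseteq> {..<Suc t} \<Longrightarrow> vars_ordered t w"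
  unfolding vars_ordered_def by (auto simp: subset_iff) (meson less_Suc_eq_le not_le nth_mem)

lemma vars_ordered_append:
  "vars_ordered t (u @ v) \<longleftrightarrow>
     vars_ordered t u \<and> (\<forall>i<length v. t < v!i \<longrightarrow> v!i - 1 \<in> set u \<union> set (take i v))"
proof
  assume r: "vars_ordered t (u @ v)"
  have "vars_ordered t u" unfolding vars_ordered_def
  proof (intro allI impI)
    fix i assume "i < length u" "t < u!i"
    then show "u!i - 1 \<in> set (take i u)" using r unfolding vars_ordered_def
      by (auto simp: nth_append dest!: spec[of _ i])
  qed
  moreover have "\<forall>i<length v. t < v!i \<longrightarrow> v!i - 1 \<in> set u \<union> set (take i v)"
  proof (intro allI impI)
    fix i assume i: "i < length v" "t < v!i"
    have "(u@v)!(length u + i) = v!i" by (simp add: nth_append)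
    then have "v!i - 1 \<in> set (take (length u + i) (u@v))" using r i unfolding vars_ordered_def
      by (metis add_less_cancel_left length_append)
    then show "v!i - 1 \<in> set u \<union> set (take i v)" by simp
  qed
  ultimately show "vars_ordered t u \<and> (\<forall>i<length v. t < v!i \<longrightarrow> v!i - 1 \<in> set u \<union> set (take i v))"
    by blast
next
  assume a: "vars_ordered t u \<and> (\<forall>i<length v. t < v!i \<longrightarrow> v!i - 1 \<in> set u \<union> set (take i v))"
  show "vars_ordered t (u @ v)" unfolding vars_ordered_def
  proof (intro allI impI)
    fix j assume j: "j < length (u @ v)" "t < (u@v)!j"
    show "(u@v)!j - 1 \<in> set (take j (u@v))"
    proof (cases "j < length u")
      case True
      then show ?thesis using a j unfolding vars_ordered_def by (auto simp: nth_append)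
    next
      case False
      define i where "i = j - length u"
      have ji: "j = length u + i" "i < length v" using False j(1) i_def by auto
      have "v!i - 1 \<in> set u \<union> set (take i v)" using a ji j(2) by (auto simp: nth_append)
      then show ?thesis using ji by (simp add: nth_append)
    qed
  qed
qed

lemma pwordsD:
  assumes "w \<in> pwords t n k"
  shows "length w = n" "\<And>x. x \<in> set w \<Longrightarrow> x < t + k" "\<And>j. j < k \<Longrightarrow> t + j \<in> set w"
    "vars_ordered t w"
  using assms unfolding pwords_def by auto

lemma pwordsI:
  assumes "length w = n" "\<And>x. x \<in> set w \<Longrightarrow> x < t + k" "\<And>j. j < k \<Longrightarrow> t + j \<in> set w"
    "vars_ordered t w"
  shows "w \<in> pwords t n k"
  using assms unfolding pwords_def
  by (auto simp: subset_iff) (metis le_add_diff_inverse nat_add_left_cancel_less not_less)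

lemma pwords_0: "pwords t n 0 = {w. length w = n \<and> set w \<subseteq> {..<t}}"
  unfolding pwords_def vars_ordered_def
  by (auto simp: subset_iff) (meson in_set_conv_nth not_less_iff_gr_or_eq less_trans)

lemma pwords_1: "pwords t n 1 = {w. length w = n \<and> set w \<subseteq> {..<Suc t} \<and> t \<in> set w}"
  unfolding pwords_def using vars_ordered_single_var[of _ t] by auto

lemma pwords_1_0: "pwords t 1 0 = (\<lambda>a. [a]) ` {..<t}"
  unfolding pwords_0 by (auto simp: length_Suc_conv)

lemma finite_pwords: "finite (pwords t n k)"
proof (rule finite_subset)
  show "pwords t n k \<subseteq> {w. set w \<subseteq> {..<t+k} \<and> length w = n}" unfolding pwords_def by auto
qed (simp add: finite_lists_length_eq)

lemma length_pcomp [simp]: "length (pcomp t f g) = length f"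
  by (simp add: pcomp_def)

lemma nth_pcomp: "i < length f \<Longrightarrow> pcomp t f g ! i = (if f!i < t then f!i else g ! (f!i - t))"
  by (simp add: pcomp_def)

lemma pcomp_append [simp]: "pcomp t (u @ v) g = pcomp t u g @ pcomp t v g"
  by (simp add: pcomp_def)

lemma pcomp_const_word: "set p \<subseteq> {..<t} \<Longrightarrow> pcomp t p g = p"
  unfolding pcomp_def by (auto simp: subset_iff intro: map_idI)

lemma pcomp_assoc:
  assumes "set f \<subseteq> {..<t + length g}"
  shows "pcomp t (pcomp t f g) h = pcomp t f (pcomp t g h)"
  unfolding pcomp_def using assms by (auto simp: subset_iff intro!: map_cong)

lemma pcomp_pwords_assoc:
  assumes "f \<in> pwords t n m" "g \<in> pwords t m k"
  shows "pcomp t (pcomp t f g) h = pcomp t f (pcomp t g h)"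
  using pwordsD(1,2)[OF assms(2)] pwordsD(2)[OF assms(1)] by (intro pcomp_assoc) auto

lemma vars_ordered_pcomp:
  assumes f: "f \<in> pwords t n m" and g: "g \<in> pwords t m k"
  shows "vars_ordered t (pcomp t f g)"
  unfolding vars_ordered_def
proof (intro allI impI)
  fix i assume i: "i < length (pcomp t f g)" and lt: "t < pcomp t f g ! i"
  then have il: "i < length f" by simp
  have nl: "\<not> f!i < t" using lt il by (auto simp: nth_pcomp split: if_splits)
  define p where "p = f!i - t"
  have fi: "f!i = t + p" using nl p_def by simp
  have "f!i < t + m" using pwordsD(2)[OF f] il by simp
  then have pm: "p < m" using fi by simp
  have gp: "g!p = pcomp t f g ! i" using il nl p_def by (simp add: nth_pcomp)
  have "g!p - 1 \<in> set (take p g)"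
    using pwordsD(4)[OF g] lt gp pm pwordsD(1)[OF g] unfolding vars_ordered_def by auto
  then obtain p' where p': "p' < p" "g!p' = g!p - 1" by (auto simp: in_set_conv_nth)
  have "t + p' \<in> set (take i f)" using vars_ordered_less[OF pwordsD(4)[OF f] il fi p'(1)] .
  then obtain i' where i': "i' < i" "f!i' = t + p'" by (auto simp: in_set_conv_nth)
  have "pcomp t f g ! i' = g!p - 1" using i' il p' by (simp add: nth_pcomp)
  moreover have "i' < length (take i (pcomp t f g))" using i' il by simp
  ultimately have "take i (pcomp t f g) ! i' = g!p - 1" using i' by simp
  then show "pcomp t f g ! i - 1 \<in> set (take i (pcomp t f g))"
    using gp \<open>i' < length (take i (pcomp t f g))\<close> nth_mem by metis
qed

lemma pcomp_pwords:
  assumes f: "f \<in> pwords t n m" and g: "g \<in> pwords t m k"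
  shows "pcomp t f g \<in> pwords t n k"
proof (rule pwordsI)
  show "length (pcomp t f g) = n" using pwordsD(1)[OF f] by simp
  have lg: "length g = m" using pwordsD(1)[OF g] .
  show "x < t + k" if "x \<in> set (pcomp t f g)" for x
  proof -
    from that obtain i where i: "i < length f" "x = pcomp t f g ! i" by (auto simp: in_set_conv_nth)
    show ?thesis
    proof (cases "f!i < t")
      case True then show ?thesis using i by (simp add: nth_pcomp)
    next
      case False
      have "f!i < t + m" using pwordsD(2)[OF f] i(1) by auto
      then have "g ! (f!i - t) \<in> set g" using False lg by auto
      then show ?thesis using i False pwordsD(2)[OF g] by (simp add: nth_pcomp)
    qed
  qed
  show "t + j \<in> set (pcomp t f g)" if jk: "j < k" for j
  proof -
    obtain p where p: "p < m" "g!p = t + j"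
      using pwordsD(3)[OF g jk] lg by (auto simp: in_set_conv_nth)
    obtain i where i: "i < length f" "f!i = t + p"
      using pwordsD(3)[OF f p(1)] by (auto simp: in_set_conv_nth)
    have "pcomp t f g ! i = t + j" using i p by (simp add: nth_pcomp)
    then show ?thesis using i(1) nth_mem[of i "pcomp t f g"] by simp
  qed
  show "vars_ordered t (pcomp t f g)" using vars_ordered_pcomp[OF f g] .
qed

lemma var_word_pwords: "var_word t m \<in> pwords t m m"
proof -
  have "t + i - 1 \<in> set (take i (map ((+) t) [0..<m]))" if "i < m" "0 < i" for i
  proof -
    have "take i (map ((+) t) [0..<m]) = map ((+) t) [0..<i]" using that by (simp add: take_map)
    moreover have "t + i - 1 = t + (i - 1)" using that by simp
    ultimately show ?thesis using that by (simp add: image_iff del: One_nat_def; linarith)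
  qed
  then show ?thesis unfolding pwords_def var_word_def vars_ordered_def by (auto simp: image_iff)
qed

lemma pwords_0_append: "x \<in> pwords t n 0 \<Longrightarrow> y \<in> pwords t n' 0 \<Longrightarrow> x @ y \<in> pwords t (n + n') 0"
  unfolding pwords_0 by auto

section \<open>Finite sets of colours and product colourings\<close>

lemma finite_colours:
  fixes D :: "nat \<Rightarrow> 'a set" and T :: "'b \<Rightarrow> 'd \<Rightarrow> 'a" and C :: "'c set"
  assumes nat_colours: "\<And>r. \<exists>n. \<forall>\<chi>::'a \<Rightarrow> nat. (\<forall>w\<in>D n. \<chi> w < r) \<longrightarrow>
      (\<exists>f\<in>S n. \<forall>g1\<in>G. \<forall>g2\<in>G. R g1 g2 \<longrightarrow> \<chi> (T f g1) = \<chi> (T f g2))"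
    and T: "\<And>n f g. f \<in> S n \<Longrightarrow> g \<in> G \<Longrightarrow> T f g \<in> D n"
    and C: "finite C"
  shows "\<exists>n. \<forall>\<chi>::'a \<Rightarrow> 'c. \<chi> ` D n \<subseteq> C \<longrightarrow>
      (\<exists>f\<in>S n. \<forall>g1\<in>G. \<forall>g2\<in>G. R g1 g2 \<longrightarrow> \<chi> (T f g1) = \<chi> (T f g2))"
proof -
  obtain h where h: "bij_betw h C {0..<card C}" using ex_bij_betw_finite_nat[OF C] by blast
  obtain n where n: "\<forall>\<chi>::'a \<Rightarrow> nat. (\<forall>w\<in>D n. \<chi> w < card C) \<longrightarrow>
      (\<exists>f\<in>S n. \<forall>g1\<in>G. \<forall>g2\<in>G. R g1 g2 \<longrightarrow> \<chi> (T f g1) = \<chi> (T f g2))"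
    using nat_colours by blast
  show ?thesis
  proof (intro exI allI impI)
    fix \<chi> :: "'a \<Rightarrow> 'c" assume sub: "\<chi> ` D n \<subseteq> C"
    then have "\<forall>w\<in>D n. h (\<chi> w) < card C" using bij_betwE[OF h] by auto
    then obtain f where f: "f \<in> S n"
      "\<forall>g1\<in>G. \<forall>g2\<in>G. R g1 g2 \<longrightarrow> h (\<chi> (T f g1)) = h (\<chi> (T f g2))"
      using n[rule_format, of "h \<circ> \<chi>"] by auto
    have "\<chi> (T f g1) = \<chi> (T f g2)" if "g1 \<in> G" "g2 \<in> G" "R g1 g2" for g1 g2
    proof (rule inj_onD[OF bij_betw_imp_inj_on[OF h]])
      show "h (\<chi> (T f g1)) = h (\<chi> (T f g2))" using f(2) that by blast
      show "\<chi> (T f g1) \<in> C" "\<chi> (T f g2) \<in> C" using sub T[OF f(1)] that by blast+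
    qed
    then show "\<exists>f\<in>S n. \<forall>g1\<in>G. \<forall>g2\<in>G. R g1 g2 \<longrightarrow> \<chi> (T f g1) = \<chi> (T f g2)"
      using f(1) by blast
  qed
qed

text \<open>Colour each point by the tuple of its colours under all the colourings \<open>\<chi> x\<close>.\<close>

lemma product_colouring:
  fixes D :: "nat \<Rightarrow> 'a set" and T :: "'b \<Rightarrow> 'd \<Rightarrow> 'a" and X :: "'x set"
  assumes nat_colours: "\<And>r. \<exists>n. \<forall>\<chi>::'a \<Rightarrow> nat. (\<forall>w\<in>D n. \<chi> w < r) \<longrightarrow>
      (\<exists>f\<in>S n. \<forall>g1\<in>G. \<forall>g2\<in>G. R g1 g2 \<longrightarrow> \<chi> (T f g1) = \<chi> (T f g2))"
    and T: "\<And>n f g. f \<in> S n \<Longrightarrow> g \<in> G \<Longrightarrow> T f g \<in> D n"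
    and X: "finite X"
  shows "\<exists>n. \<forall>\<chi>::'x \<Rightarrow> 'a \<Rightarrow> nat. (\<forall>x\<in>X. \<forall>w\<in>D n. \<chi> x w < r) \<longrightarrow>
      (\<exists>f\<in>S n. \<forall>x\<in>X. \<forall>g1\<in>G. \<forall>g2\<in>G. R g1 g2 \<longrightarrow> \<chi> x (T f g1) = \<chi> x (T f g2))"
proof -
  obtain xs where xs: "set xs = X" using finite_list[OF X] by blast
  define C where "C = {cs. set cs \<subseteq> {..<r} \<and> length cs = length xs}"
  have "finite C" unfolding C_def by (rule finite_lists_length_eq) simp
  from finite_colours[OF nat_colours T this] obtain n where n: "\<forall>\<Phi>::'a \<Rightarrow> nat list. \<Phi> ` D n \<subseteq> C \<longrightarrow>
      (\<exists>f\<in>S n. \<forall>g1\<in>G. \<forall>g2\<in>G. R g1 g2 \<longrightarrow> \<Phi> (T f g1) = \<Phi> (T f g2))"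
    by blast
  show ?thesis
  proof (intro exI[of _ n] allI impI)
    fix \<chi> :: "'x \<Rightarrow> 'a \<Rightarrow> nat" assume bounded: "\<forall>x\<in>X. \<forall>w\<in>D n. \<chi> x w < r"
    have "(\<lambda>w. map (\<lambda>x. \<chi> x w) xs) ` D n \<subseteq> C" using bounded xs unfolding C_def by auto
    then obtain f where "f \<in> S n" "\<forall>g1\<in>G. \<forall>g2\<in>G. R g1 g2 \<longrightarrow>
        map (\<lambda>x. \<chi> x (T f g1)) xs = map (\<lambda>x. \<chi> x (T f g2)) xs"
      using n[THEN spec, of "\<lambda>w. map (\<lambda>x. \<chi> x w) xs"] by blast
    then show "\<exists>f\<in>S n. \<forall>x\<in>X. \<forall>g1\<in>G. \<forall>g2\<in>G. R g1 g2 \<longrightarrow> \<chi> x (T f g1) = \<chi> x (T f g2)"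
      unfolding map_eq_conv xs by blast
  qed
qed

lemma ex_const_on_iff: "(\<exists>c. \<forall>x\<in>A. h x = c) \<longleftrightarrow> (\<forall>x\<in>A. \<forall>y\<in>A. h x = h y)"
  by (cases "A = {}") auto

lemma GR_iff_pairs: "GR t k m r \<longleftrightarrow> (\<exists>n. \<forall>\<chi>::nat list \<Rightarrow> nat. (\<forall>w\<in>pwords t n k. \<chi> w < r) \<longrightarrow>
    (\<exists>f\<in>pwords t n m. \<forall>g1\<in>pwords t m k. \<forall>g2\<in>pwords t m k. True \<longrightarrow> \<chi> (pcomp t f g1) = \<chi> (pcomp t f g2)))"
  unfolding GR_def ex_const_on_iff by simp

lemma GR_finite_colours:
  fixes C :: "'c set"
  assumes "\<And>r. GR t k m r" and "finite C"
  shows "\<exists>n. \<forall>\<chi>::nat list \<Rightarrow> 'c. \<chi> ` pwords t n k \<subseteq> C \<longrightarrow>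
     (\<exists>f\<in>pwords t n m. \<exists>c. \<forall>g\<in>pwords t m k. \<chi> (pcomp t f g) = c)"
  using finite_colours[OF assms(1)[unfolded GR_iff_pairs] pcomp_pwords assms(2)]
  unfolding ex_const_on_iff by simp

lemma GR_product_colouring:
  fixes X :: "'x set"
  assumes "\<And>r. GR t k m r" and "finite X"
  shows "\<exists>n. \<forall>\<chi>::'x \<Rightarrow> nat list \<Rightarrow> nat. (\<forall>x\<in>X. \<forall>w\<in>pwords t n k. \<chi> x w < r) \<longrightarrow>
     (\<exists>f\<in>pwords t n m. \<forall>x\<in>X. \<exists>c. \<forall>g\<in>pwords t m k. \<chi> x (pcomp t f g) = c)"
  using product_colouring[OF assms(1)[unfolded GR_iff_pairs] pcomp_pwords assms(2)]
  unfolding ex_const_on_iff by simp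

section \<open>The Hales--Jewett theorem\<close>

text \<open>A line is a parameter word with one variable; \<open>pcomp t l [a]\<close> is its point at the letter \<open>a\<close>.\<close>

definition mono_line :: "nat \<Rightarrow> (nat list \<Rightarrow> 'c) \<Rightarrow> nat \<Rightarrow> bool" where
  "mono_line t \<chi> n \<longleftrightarrow> (\<exists>l\<in>pwords t n 1. \<exists>c. \<forall>a<t. \<chi> (pcomp t l [a]) = c)"

lemma ball_pwords_1_0: "(\<forall>g\<in>pwords t 1 0. P g) \<longleftrightarrow> (\<forall>a<t. P [a])"
  unfolding pwords_1_0 by auto

lemma GR_0_1_iff:
  "GR t 0 1 r \<longleftrightarrow> (\<exists>n. \<forall>\<chi>. (\<forall>w\<in>pwords t n 0. \<chi> w < r) \<longrightarrow> mono_line t \<chi> n)"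
  unfolding GR_def mono_line_def ball_pwords_1_0 ..

lemma GR_0_1_product_colouring:
  fixes X :: "'x set"
  assumes "\<And>r. GR t 0 1 r" and "finite X"
  shows "\<exists>n. \<forall>\<chi>::'x \<Rightarrow> nat list \<Rightarrow> nat. (\<forall>x\<in>X. \<forall>w\<in>pwords t n 0. \<chi> x w < r) \<longrightarrow>
     (\<exists>l\<in>pwords t n 1. \<forall>x\<in>X. \<exists>c. \<forall>a<t. \<chi> x (pcomp t l [a]) = c)"
  using GR_product_colouring[OF assms] unfolding ball_pwords_1_0 .

lemma pcomp_line_letter: "l \<in> pwords t n 1 \<Longrightarrow> a < t \<Longrightarrow> pcomp t l [a] \<in> pwords t n 0"
  unfolding pwords_0 pwords_1 pcomp_def by (auto simp: subset_iff)

lemma pcomp_line_var: "l \<in> pwords t n 1 \<Longrightarrow> pcomp t l [t] = l"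
  unfolding pcomp_def pwords_1 by (auto intro!: map_idI simp: subset_iff less_Suc_eq)

lemma pcomp_line_Cons: "l \<in> pwords t n 1 \<Longrightarrow> pcomp t l (a # b) = pcomp t l [a]"
  unfolding pcomp_def pwords_1 by (auto intro!: map_cong simp: subset_iff less_Suc_eq)

lemma pwords_0_Suc_mono: "pwords t n 0 \<subseteq> pwords (Suc t) n 0"
  unfolding pwords_0 by auto

lemma pwords_0_append_1: "x \<in> pwords t n 0 \<Longrightarrow> y \<in> pwords t n' 1 \<Longrightarrow> x @ y \<in> pwords t (n + n') 1"
  unfolding pwords_0 pwords_1 by auto

lemma pwords_1_append_1: "x \<in> pwords t n 1 \<Longrightarrow> y \<in> pwords t n' 1 \<Longrightarrow> x @ y \<in> pwords t (n + n') 1"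
  unfolding pwords_1 by auto

definition lift_line :: "nat \<Rightarrow> nat list \<Rightarrow> nat list" where
  "lift_line t w = map (\<lambda>v. if v < t then v else Suc t) w"

lemma lift_line_pwords: "w \<in> pwords t n 1 \<Longrightarrow> lift_line t w \<in> pwords (Suc t) n 1"
  unfolding pwords_1 lift_line_def by (auto simp: subset_iff image_iff)

lemma pcomp_lift_line: "w \<in> pwords t n 1 \<Longrightarrow> pcomp (Suc t) (lift_line t w) [a] = pcomp t w [a]"
  unfolding pwords_1 lift_line_def pcomp_def by (auto simp: subset_iff intro!: map_cong)

lemma mono_line_append_const:
  assumes "mono_line t (\<lambda>x. \<chi> (x @ p)) n" and p: "set p \<subseteq> {..<t}"
  shows "mono_line t \<chi> (n + length p)"
proof -
  obtain l c where l: "l \<in> pwords t n 1" "\<forall>a<t. \<chi> (pcomp t l [a] @ p) = c"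
    using assms(1) unfolding mono_line_def by blast
  have "l @ p \<in> pwords t (n + length p) 1" using l(1) p unfolding pwords_1 by auto
  moreover have "pcomp t (l @ p) [a] = pcomp t l [a] @ p" for a using pcomp_const_word[OF p] by simp
  ultimately show ?thesis using l(2) unfolding mono_line_def by metis
qed

text \<open>Colour focusing: lines over \<open>{..t}\<close> that are monochromatic on the letters below \<open>t\<close>, have
  pairwise distinct colours, and all have the same point \<open>F\<close> at the letter \<open>t\<close>.\<close>

definition focused :: "nat \<Rightarrow> (nat list \<Rightarrow> nat) \<Rightarrow> nat \<Rightarrow> nat list \<Rightarrow> nat list list \<Rightarrow> bool" where
  "focused t \<chi> n F ls \<longleftrightarrow> F \<in> pwords (Suc t) n 0 \<and> distinct (map (\<lambda>l. \<chi> (pcomp (Suc t) l [0])) ls) \<and>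
     (\<forall>l\<in>set ls. l \<in> pwords (Suc t) n 1 \<and> pcomp (Suc t) l [t] = F \<and>
        (\<forall>a<t. \<chi> (pcomp (Suc t) l [a]) = \<chi> (pcomp (Suc t) l [0])))"

lemma focused_mono_line:
  assumes "focused t \<chi> n F ls" "l \<in> set ls" "\<chi> F = \<chi> (pcomp (Suc t) l [0])"
  shows "mono_line (Suc t) \<chi> n"
  using assms unfolding focused_def mono_line_def by (metis less_Suc_eq)

text \<open>The new line \<open>F @ w\<close> has the colour of \<open>F\<close>, which is new.\<close>

lemma focused_extend:
  assumes t: "0 < t" and w: "w \<in> pwords t L 1"
    and w_mono: "\<And>x a. x \<in> pwords (Suc t) n 0 \<Longrightarrow> a < t \<Longrightarrow>
       \<chi> (x @ pcomp t w [a]) = \<chi> (x @ pcomp t w [0])"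
    and foc: "focused t (\<lambda>x. \<chi> (x @ pcomp t w [0])) n F ls"
    and new: "\<forall>l\<in>set ls. \<chi> (F @ pcomp t w [0]) \<noteq> \<chi> (pcomp (Suc t) l [0] @ pcomp t w [0])"
  shows "focused t \<chi> (n + L) (F @ pcomp t w [t])
           (map (\<lambda>l. l @ lift_line t w) ls @ [F @ lift_line t w])"
proof -
  define \<chi>' where "\<chi>' x = \<chi> (x @ pcomp t w [0])" for x
  have F: "F \<in> pwords (Suc t) n 0" using foc unfolding focused_def by blast
  then have Fs: "set F \<subseteq> {..<Suc t}" unfolding pwords_0 by auto
  have ls: "l \<in> pwords (Suc t) n 1" "pcomp (Suc t) l [t] = F"
    "\<forall>a<t. \<chi>' (pcomp (Suc t) l [a]) = \<chi>' (pcomp (Suc t) l [0])" if "l \<in> set ls" for l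
    using foc that unfolding focused_def \<chi>'_def by blast+
  have pcomp_ext: "pcomp (Suc t) (x @ lift_line t w) [a] = pcomp (Suc t) x [a] @ pcomp t w [a]" for x a
    using pcomp_lift_line[OF w] by simp
  have colour_F: "\<chi> (pcomp (Suc t) (F @ lift_line t w) [a]) = \<chi>' F" if "a < t" for a
    using w_mono[OF F that] unfolding pcomp_ext pcomp_const_word[OF Fs] \<chi>'_def .
  have colour_l: "\<chi> (pcomp (Suc t) (l @ lift_line t w) [a]) = \<chi>' (pcomp (Suc t) l [0])"
    if "l \<in> set ls" "a < t" for l a
  proof -
    have "pcomp (Suc t) l [a] \<in> pwords (Suc t) n 0"
      using pcomp_line_letter[OF ls(1)[OF that(1)]] that(2) by simp
    then have "\<chi> (pcomp (Suc t) (l @ lift_line t w) [a]) = \<chi>' (pcomp (Suc t) l [a])"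
      unfolding pcomp_ext \<chi>'_def using w_mono that(2) by blast
    also have "\<dots> = \<chi>' (pcomp (Suc t) l [0])" using ls(3)[OF that(1)] that(2) by blast
    finally show ?thesis .
  qed
  have line_at_t: "pcomp t w [t] \<in> pwords (Suc t) L 0"
    using w unfolding pwords_0 pwords_1 pcomp_def by (auto simp: subset_iff)
  have colours: "map (\<lambda>l. \<chi> (pcomp (Suc t) l [0])) (map (\<lambda>l. l @ lift_line t w) ls @ [F @ lift_line t w]) =
    map (\<lambda>l. \<chi>' (pcomp (Suc t) l [0])) ls @ [\<chi>' F]"
    using colour_l colour_F t by (simp del: pcomp_append)
  have "distinct (map (\<lambda>l. \<chi>' (pcomp (Suc t) l [0])) ls)"
    using foc unfolding focused_def \<chi>'_def by simp
  moreover have "\<chi>' F \<notin> (\<lambda>l. \<chi>' (pcomp (Suc t) l [0])) ` set ls" using new unfolding \<chi>'_def by auto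
  ultimately have distinct: "distinct (map (\<lambda>l. \<chi> (pcomp (Suc t) l [0]))
      (map (\<lambda>l. l @ lift_line t w) ls @ [F @ lift_line t w]))"
    unfolding colours by simp
  have F': "F @ pcomp t w [t] \<in> pwords (Suc t) (n + L) 0" using pwords_0_append[OF F line_at_t] .
  have lines: "l @ lift_line t w \<in> pwords (Suc t) (n + L) 1 \<and>
      pcomp (Suc t) (l @ lift_line t w) [t] = F @ pcomp t w [t] \<and>
      (\<forall>a<t. \<chi> (pcomp (Suc t) (l @ lift_line t w) [a]) = \<chi> (pcomp (Suc t) (l @ lift_line t w) [0]))"
    if "l \<in> set ls" for l
    using pwords_1_append_1[OF ls(1)[OF that] lift_line_pwords[OF w]] colour_l[OF that] t
    by (simp add: pcomp_lift_line[OF w] ls(2)[OF that])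
  have last_line: "F @ lift_line t w \<in> pwords (Suc t) (n + L) 1 \<and>
      pcomp (Suc t) (F @ lift_line t w) [t] = F @ pcomp t w [t] \<and>
      (\<forall>a<t. \<chi> (pcomp (Suc t) (F @ lift_line t w) [a]) = \<chi> (pcomp (Suc t) (F @ lift_line t w) [0]))"
    using pwords_0_append_1[OF F lift_line_pwords[OF w]] colour_F t
    by (simp add: pcomp_lift_line[OF w] pcomp_const_word[OF Fs])
  show ?thesis unfolding focused_def
  proof (intro conjI)
    show "\<forall>l'\<in>set (map (\<lambda>l. l @ lift_line t w) ls @ [F @ lift_line t w]).
        l' \<in> pwords (Suc t) (n + L) 1 \<and> pcomp (Suc t) l' [t] = F @ pcomp t w [t] \<and>
        (\<forall>a<t. \<chi> (pcomp (Suc t) l' [a]) = \<chi> (pcomp (Suc t) l' [0]))"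
      unfolding set_append set_map list.set using lines last_line by blast
  qed (fact F' distinct)+
qed

lemma colour_focusing:
  assumes HJ: "\<And>r. GR t 0 1 r" and t: "0 < t"
  shows "\<exists>n. \<forall>\<chi>. (\<forall>w\<in>pwords (Suc t) n 0. \<chi> w < r) \<longrightarrow>
     mono_line (Suc t) \<chi> n \<or> (\<exists>F ls. length ls = s \<and> focused t \<chi> n F ls)"
proof (induction s)
  case 0
  show ?case by (rule exI[of _ 0]) (auto simp: focused_def pwords_0)
next
  case (Suc s)
  obtain n where n: "\<forall>\<chi>. (\<forall>w\<in>pwords (Suc t) n 0. \<chi> w < r) \<longrightarrow>
     mono_line (Suc t) \<chi> n \<or> (\<exists>F ls. length ls = s \<and> focused t \<chi> n F ls)"
    using Suc.IH by blast
  obtain L where L: "\<forall>\<chi>::nat list \<Rightarrow> nat list \<Rightarrow> nat.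
      (\<forall>x\<in>pwords (Suc t) n 0. \<forall>y\<in>pwords t L 0. \<chi> x y < r) \<longrightarrow>
      (\<exists>l\<in>pwords t L 1. \<forall>x\<in>pwords (Suc t) n 0. \<exists>c. \<forall>a<t. \<chi> x (pcomp t l [a]) = c)"
    using GR_0_1_product_colouring[OF HJ finite_pwords] by blast
  show ?case
  proof (intro exI[of _ "n + L"] allI impI)
    fix \<chi> :: "nat list \<Rightarrow> nat"
    assume bounded: "\<forall>w\<in>pwords (Suc t) (n + L) 0. \<chi> w < r"
    have append_bounded: "\<chi> (x @ y) < r" if "x \<in> pwords (Suc t) n 0" "y \<in> pwords (Suc t) L 0" for x y
      using bounded pwords_0_append[OF that] by blast
    have "\<forall>x\<in>pwords (Suc t) n 0. \<forall>y\<in>pwords t L 0. \<chi> (x @ y) < r"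
      using append_bounded pwords_0_Suc_mono by blast
    then obtain w where w: "w \<in> pwords t L 1"
      "\<forall>x\<in>pwords (Suc t) n 0. \<exists>c. \<forall>a<t. \<chi> (x @ pcomp t w [a]) = c"
      using L[THEN spec, of "\<lambda>x y. \<chi> (x @ y)"] by blast
    have w_mono: "\<chi> (x @ pcomp t w [a]) = \<chi> (x @ pcomp t w [0])"
      if "x \<in> pwords (Suc t) n 0" "a < t" for x a
      using w(2) that t by metis
    have p0: "pcomp t w [0] \<in> pwords (Suc t) L 0"
      using pcomp_line_letter[OF w(1) t] unfolding pwords_0 by auto
    then have p0s: "set (pcomp t w [0]) \<subseteq> {..<Suc t}" "length (pcomp t w [0]) = L"
      unfolding pwords_0 by auto
    have "\<forall>x\<in>pwords (Suc t) n 0. \<chi> (x @ pcomp t w [0]) < r" using append_bounded p0 by blast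
    with n[THEN spec, of "\<lambda>x. \<chi> (x @ pcomp t w [0])"] have "mono_line (Suc t) (\<lambda>x. \<chi> (x @ pcomp t w [0])) n \<or>
        (\<exists>F ls. length ls = s \<and> focused t (\<lambda>x. \<chi> (x @ pcomp t w [0])) n F ls)" by blast
    then consider
      (mono) "mono_line (Suc t) (\<lambda>x. \<chi> (x @ pcomp t w [0])) n"
      | (foc) F ls where "length ls = s" "focused t (\<lambda>x. \<chi> (x @ pcomp t w [0])) n F ls"
      by blast
    then have "mono_line (Suc t) (\<lambda>x. \<chi> (x @ pcomp t w [0])) n \<or>
        (\<exists>F ls. length ls = Suc s \<and> focused t \<chi> (n + L) F ls)"
    proof cases
      case foc
      show ?thesis
      proof (cases "\<exists>l\<in>set ls. \<chi> (F @ pcomp t w [0]) = \<chi> (pcomp (Suc t) l [0] @ pcomp t w [0])")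
        case True
        then show ?thesis using focused_mono_line[OF foc(2)] by blast
      next
        case False
        then show ?thesis using focused_extend[OF t w(1) w_mono foc(2)] foc(1) by fastforce
      qed
    qed simp
    then show "mono_line (Suc t) \<chi> (n + L) \<or> (\<exists>F ls. length ls = Suc s \<and> focused t \<chi> (n + L) F ls)"
      using mono_line_append_const[OF _ p0s(1)] p0s(2) by auto
  qed
qed

theorem hales_jewett: "GR t 0 1 r"
proof (induction t arbitrary: r)
  case 0
  have "[0] \<in> pwords 0 1 1" unfolding pwords_1 by auto
  then show ?case unfolding GR_0_1_iff mono_line_def by blast
next
  case (Suc t)
  show ?case
  proof (cases "t = 0")
    case True
    have "[1] \<in> pwords 1 1 1" unfolding pwords_1 by auto
    then show ?thesis unfolding GR_0_1_iff mono_line_def using True by (auto intro!: exI[of _ 1])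
  next
    case False
    obtain n where n: "\<forall>\<chi>. (\<forall>w\<in>pwords (Suc t) n 0. \<chi> w < r) \<longrightarrow>
       mono_line (Suc t) \<chi> n \<or> (\<exists>F ls. length ls = r \<and> focused t \<chi> n F ls)"
      using colour_focusing[OF Suc.IH, of r r] False by blast
    have "mono_line (Suc t) \<chi> n" if bounded: "\<forall>w\<in>pwords (Suc t) n 0. \<chi> w < r" for \<chi>
    proof -
      consider "mono_line (Suc t) \<chi> n" | F ls where "length ls = r" "focused t \<chi> n F ls"
        using n bounded by blast
      then show ?thesis
      proof cases
        case 2
        text \<open>The \<open>r\<close> focused lines use up all \<open>r\<close> colours, so one of them has the colour of \<open>F\<close>.\<close>
        let ?cs = "map (\<lambda>l. \<chi> (pcomp (Suc t) l [0])) ls"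
        have "set ?cs \<subseteq> {..<r}"
          using 2(2) bounded pcomp_line_letter[of _ "Suc t" n 0] unfolding focused_def by auto
        moreover have "card (set ?cs) = r"
          using 2 distinct_card[of ?cs] unfolding focused_def by simp
        ultimately have "set ?cs = {..<r}" by (simp add: card_subset_eq)
        moreover have "\<chi> F < r" using 2(2) bounded unfolding focused_def by blast
        ultimately obtain l where "l \<in> set ls" "\<chi> F = \<chi> (pcomp (Suc t) l [0])" by auto
        then show ?thesis using focused_mono_line[OF 2(2)] by blast
      qed
    qed
    then show ?thesis unfolding GR_0_1_iff by blast
  qed
qed

section \<open>The Hales--Jewett theorem for subspaces\<close>

definition shift_vars :: "nat \<Rightarrow> nat list \<Rightarrow> nat list" where
  "shift_vars t w = map (\<lambda>x. if x < t then x else Suc x) w"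

lemma append_shift_vars_pwords:
  assumes G: "G \<in> pwords t n m" and l: "l \<in> pwords t L 1"
  shows "l @ shift_vars t G \<in> pwords t (L + n) (Suc m)"
proof (rule pwordsI)
  show "length (l @ shift_vars t G) = L + n"
    using pwordsD(1)[OF G] pwordsD(1)[OF l] by (simp add: shift_vars_def)
  show "x < t + Suc m" if "x \<in> set (l @ shift_vars t G)" for x
    using that pwordsD(2)[OF G] pwordsD(2)[OF l] by (fastforce simp: shift_vars_def)
  show "t + j \<in> set (l @ shift_vars t G)" if "j < Suc m" for j
  proof (cases j)
    case 0 then show ?thesis using pwordsD(3)[OF l, of 0] by simp
  next
    case (Suc j')
    then have "t + j' \<in> set G" using pwordsD(3)[OF G, of j'] that by simp
    then have "Suc (t + j') \<in> set (shift_vars t G)"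
      unfolding shift_vars_def by (force simp: image_iff)
    then show ?thesis using Suc by simp
  qed
  show "vars_ordered t (l @ shift_vars t G)" unfolding vars_ordered_append
  proof (intro conjI allI impI)
    show "vars_ordered t l" using pwordsD(4)[OF l] .
    fix i assume i: "i < length (shift_vars t G)" "t < shift_vars t G ! i"
    then have il: "i < length G" by (simp add: shift_vars_def)
    have ge: "t \<le> G!i" using i il by (auto simp: shift_vars_def split: if_splits)
    have si: "shift_vars t G ! i = Suc (G!i)" using il ge by (simp add: shift_vars_def)
    show "shift_vars t G ! i - 1 \<in> set l \<union> set (take i (shift_vars t G))"
    proof (cases "G!i = t")
      case True then show ?thesis using si pwordsD(3)[OF l, of 0] by simp
    next
      case False
      then have "G!i - 1 \<in> set (take i G)"
        using pwordsD(4)[OF G] il ge unfolding vars_ordered_def by simp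
      moreover have "t \<le> G!i - 1" using False ge by simp
      ultimately have "Suc (G!i - 1) \<in> set (take i (shift_vars t G))"
        unfolding shift_vars_def take_map
        by (force simp: image_iff)
      then show ?thesis using si False ge by simp
    qed
  qed
qed

lemma pcomp_shift_vars_Cons: "pcomp t (shift_vars t G) (a # b) = pcomp t G b"
  unfolding pcomp_def shift_vars_def by (auto intro!: map_cong simp: Suc_diff_le)

text \<open>A subspace \<open>G\<close> on which the colours of all left extensions \<open>x @ y\<close> are constant, preceded
  by a line that is monochromatic for \<open>x \<mapsto> \<chi> (x @ G \<cdot> 0\<dots>0)\<close>, is a monochromatic subspace of one
  more dimension.\<close>

lemma GR_0_Suc:
  assumes t: "0 < t" and IH: "\<And>r. GR t 0 m r"
  shows "GR t 0 (Suc m) r"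
proof -
  obtain L where L: "\<forall>\<chi>::nat list \<Rightarrow> nat. (\<forall>w\<in>pwords t L 0. \<chi> w < r) \<longrightarrow> mono_line t \<chi> L"
    using hales_jewett[of t r] unfolding GR_0_1_iff by blast
  obtain n where n: "\<forall>\<Psi>::nat list \<Rightarrow> nat list \<Rightarrow> nat. (\<forall>x\<in>pwords t L 0. \<forall>y\<in>pwords t n 0. \<Psi> x y < r) \<longrightarrow>
      (\<exists>G\<in>pwords t n m. \<forall>x\<in>pwords t L 0. \<exists>c. \<forall>g\<in>pwords t m 0. \<Psi> x (pcomp t G g) = c)"
    using GR_product_colouring[OF IH finite_pwords] by blast
  show ?thesis unfolding GR_def
  proof (intro exI[of _ "L + n"] allI impI)
    fix \<chi> :: "nat list \<Rightarrow> nat"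
    assume bounded: "\<forall>w\<in>pwords t (L + n) 0. \<chi> w < r"
    then have "\<forall>x\<in>pwords t L 0. \<forall>y\<in>pwords t n 0. \<chi> (x @ y) < r" using pwords_0_append by blast
    then obtain G where G: "G \<in> pwords t n m"
        "\<forall>x\<in>pwords t L 0. \<exists>c. \<forall>g\<in>pwords t m 0. \<chi> (x @ pcomp t G g) = c"
      using n[THEN spec, of "\<lambda>x y. \<chi> (x @ y)"] by blast
    define g0 where "g0 = replicate m (0::nat)"
    have g0: "g0 \<in> pwords t m 0" unfolding g0_def pwords_0 using t by auto
    have G_const: "\<chi> (x @ pcomp t G g) = \<chi> (x @ pcomp t G g0)" if "x \<in> pwords t L 0" "g \<in> pwords t m 0" for x g
      using G(2) that g0 by metis
    have "\<forall>x\<in>pwords t L 0. \<chi> (x @ pcomp t G g0) < r"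
      using bounded pwords_0_append pcomp_pwords[OF G(1) g0] by blast
    then obtain l c where l: "l \<in> pwords t L 1" "\<forall>a<t. \<chi> (pcomp t l [a] @ pcomp t G g0) = c"
      using L[THEN spec, of "\<lambda>x. \<chi> (x @ pcomp t G g0)"] unfolding mono_line_def by blast
    show "\<exists>f\<in>pwords t (L + n) (Suc m). \<exists>c. \<forall>g\<in>pwords t (Suc m) 0. \<chi> (pcomp t f g) = c"
    proof (intro bexI[OF _ append_shift_vars_pwords[OF G(1) l(1)]] exI[of _ c] ballI)
      fix g assume "g \<in> pwords t (Suc m) 0"
      then obtain a b where g: "g = a # b" "a < t" "b \<in> pwords t m 0"
        unfolding pwords_0 by (cases g) auto
      have "pcomp t (l @ shift_vars t G) g = pcomp t l [a] @ pcomp t G b"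
        using g(1) pcomp_shift_vars_Cons pcomp_line_Cons[OF l(1)] by simp
      then show "\<chi> (pcomp t (l @ shift_vars t G) g) = c"
        using G_const[OF pcomp_line_letter[OF l(1) g(2)] g(3)] l(2) g(2) by simp
    qed
  qed
qed

theorem hales_jewett_subspace: "GR t 0 m r"
proof (cases "t = 0")
  case True
  then have "pwords t m 0 \<subseteq> {[]}" unfolding pwords_0 by auto
  then show ?thesis unfolding GR_def ex_const_on_iff
    by (intro exI[of _ m] allI impI bexI[OF _ var_word_pwords]) blast
next
  case False
  then show ?thesis
  proof (induction m arbitrary: r)
    case 0
    have "[] \<in> pwords t 0 0" by (simp add: pwords_0)
    then show ?case unfolding GR_def by (intro exI[of _ 0]) (auto simp: pwords_0)
  next
    case (Suc m)
    then show ?case using GR_0_Suc by blast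
  qed
qed

section \<open>Colourings of constant prefixes\<close>

definition const_prefix :: "nat \<Rightarrow> nat list \<Rightarrow> nat list" where
  "const_prefix t w = takeWhile (\<lambda>x. x < t) w"

lemma const_prefix_append_consts: "set x \<subseteq> {..<t} \<Longrightarrow> const_prefix t (x @ y) = x @ const_prefix t y"
  unfolding const_prefix_def by (auto simp: subset_iff intro: takeWhile_append2)

lemma const_prefix_append_var: "t \<in> set x \<Longrightarrow> const_prefix t (x @ y) = const_prefix t x"
  unfolding const_prefix_def by (rule takeWhile_append1) auto

lemma const_prefix_Cons_var: "const_prefix t (t # y) = []"
  unfolding const_prefix_def by simp

lemma const_prefix_Cons_const: "a < t \<Longrightarrow> const_prefix t (a # y) = a # const_prefix t y"
  unfolding const_prefix_def by simp

lemma set_const_prefix: "set (const_prefix t w) \<subseteq> {..<t}"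
  unfolding const_prefix_def by (auto dest: set_takeWhileD)

lemma const_prefix_take: "const_prefix t w = take (length (const_prefix t w)) w"
  unfolding const_prefix_def by (metis takeWhile_eq_take)

lemma length_const_prefix_less: "t \<in> set w \<Longrightarrow> length (const_prefix t w) < length w"
proof -
  assume "t \<in> set w"
  then have "dropWhile (\<lambda>x. x < t) w \<noteq> []" by (auto simp: dropWhile_eq_Nil_conv)
  then show ?thesis unfolding const_prefix_def
    by (metis length_append less_add_same_cancel1 length_greater_0_conv takeWhile_dropWhile_id)
qed

lemma nth_const_prefix_less: "i < length (const_prefix t w) \<Longrightarrow> w!i < t"
  unfolding const_prefix_def by (metis nth_mem set_takeWhileD takeWhile_nth)

lemma nth_length_const_prefix: "length (const_prefix t w) < length w \<Longrightarrow> \<not> w ! length (const_prefix t w) < t"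
  unfolding const_prefix_def by (rule nth_length_takeWhile)

lemma pwords_1_Suc_cases:
  assumes "g \<in> pwords t (Suc N) 1"
  obtains g' where "g = t # g'"
  | a g' where "g = a # g'" "a < t" "g' \<in> pwords t N 1"
proof -
  obtain a g' where g: "g = a # g'" using assms unfolding pwords_1 by (cases g) auto
  have a: "a \<le> t" "length g' = N" "set g' \<subseteq> {..<Suc t}" "t \<in> set (a # g')"
    using assms g unfolding pwords_1 by auto
  show ?thesis
  proof (cases "a = t")
    case True then show ?thesis using that(1) g by blast
  next
    case False
    then have "g' \<in> pwords t N 1" using a unfolding pwords_1 by auto
    then show ?thesis using that(2) g a False by auto
  qed
qed

lemma pwords_1_same_prefix_length_cases:
  assumes g1: "g1 \<in> pwords t (Suc N) 1" and g2: "g2 \<in> pwords t (Suc N) 1"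
    and same_length: "length (const_prefix t g1) = length (const_prefix t g2)"
  obtains g1' g2' where "g1 = t # g1'" "g2 = t # g2'"
  | a1 g1' a2 g2' where "g1 = a1 # g1'" "a1 < t" "g1' \<in> pwords t N 1" "g2 = a2 # g2'" "a2 < t"
      "g2' \<in> pwords t N 1" "length (const_prefix t g1') = length (const_prefix t g2')"
proof (cases rule: pwords_1_Suc_cases[OF g1])
  case (1 g1')
  then have "length (const_prefix t g2) = 0" using same_length by (simp add: const_prefix_Cons_var)
  then obtain g2' where "g2 = t # g2'"
    by (cases rule: pwords_1_Suc_cases[OF g2]) (auto simp: const_prefix_Cons_const)
  then show ?thesis using that(1) 1 by blast
next
  case (2 a1 g1')
  note g1' = this
  then have same_length': "length (const_prefix t g2) = Suc (length (const_prefix t g1'))"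
    using same_length by (simp add: const_prefix_Cons_const)
  show ?thesis
  proof (cases rule: pwords_1_Suc_cases[OF g2])
    case 1
    then show ?thesis using same_length' by (simp add: const_prefix_Cons_var)
  next
    case (2 a2 g2')
    then have "length (const_prefix t g1') = length (const_prefix t g2')"
      using same_length' by (simp add: const_prefix_Cons_const)
    then show ?thesis using that(2) g1' 2 by blast
  qed
qed

lemma const_prefix_pcomp_line_var:
  assumes "l \<in> pwords t L 1"
  shows "const_prefix t (pcomp t (l @ shift_vars t G) (t # g)) = const_prefix t l"
proof -
  have "pcomp t (l @ shift_vars t G) (t # g) = l @ pcomp t G g"
    using pcomp_shift_vars_Cons[of t G t g] pcomp_line_Cons[OF assms, of t g] pcomp_line_var[OF assms] by simp
  moreover have "t \<in> set l" using assms unfolding pwords_1 by auto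
  ultimately show ?thesis using const_prefix_append_var by simp
qed

lemma const_prefix_pcomp_line_const:
  assumes "l \<in> pwords t L 1" "a < t"
  shows "const_prefix t (pcomp t (l @ shift_vars t G) (a # g)) = pcomp t l [a] @ const_prefix t (pcomp t G g)"
proof -
  have "pcomp t (l @ shift_vars t G) (a # g) = pcomp t l [a] @ pcomp t G g"
    using pcomp_shift_vars_Cons pcomp_line_Cons[OF assms(1)] by simp
  moreover have "set (pcomp t l [a]) \<subseteq> {..<t}"
    using pcomp_line_letter[OF assms] unfolding pwords_0 by auto
  ultimately show ?thesis using const_prefix_append_consts by simp
qed

definition prefix_by_length :: "nat \<Rightarrow> nat \<Rightarrow> nat \<Rightarrow> bool" where
  "prefix_by_length t N r \<longleftrightarrow> (\<exists>M. \<forall>\<psi>::nat list \<Rightarrow> nat. (\<forall>w. \<psi> w < r) \<longrightarrow>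
     (\<exists>F\<in>pwords t M N. \<forall>g1\<in>pwords t N 1. \<forall>g2\<in>pwords t N 1.
        length (const_prefix t g1) = length (const_prefix t g2) \<longrightarrow>
        \<psi> (const_prefix t (pcomp t F g1)) = \<psi> (const_prefix t (pcomp t F g2))))"

text \<open>As for subspaces: a word \<open>G\<close> that works for the colours of all left extensions, preceded
  by a line that is monochromatic for the colours of all right extensions by prefixes of \<open>G \<cdot> g'\<close>.\<close>

lemma prefix_by_length_Suc:
  assumes t: "0 < t" and IH: "\<And>r. prefix_by_length t N r"
  shows "prefix_by_length t (Suc N) r"
proof -
  obtain L where L: "\<forall>\<chi>::nat list \<Rightarrow> nat list \<Rightarrow> nat.
      (\<forall>g'\<in>pwords t N 1. \<forall>x\<in>pwords t L 0. \<chi> g' x < r) \<longrightarrow>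
      (\<exists>l\<in>pwords t L 1. \<forall>g'\<in>pwords t N 1. \<exists>c. \<forall>a<t. \<chi> g' (pcomp t l [a]) = c)"
    using GR_0_1_product_colouring[OF hales_jewett finite_pwords] by blast
  have IH': "\<exists>M. \<forall>\<psi>::nat list \<Rightarrow> nat. (\<forall>w\<in>UNIV. \<psi> w < r') \<longrightarrow> (\<exists>G\<in>pwords t M N.
     \<forall>g1\<in>pwords t N 1. \<forall>g2\<in>pwords t N 1. length (const_prefix t g1) = length (const_prefix t g2) \<longrightarrow>
       \<psi> (const_prefix t (pcomp t G g1)) = \<psi> (const_prefix t (pcomp t G g2)))" for r'
    using IH[of r'] unfolding prefix_by_length_def by simp
  obtain M where M: "\<forall>\<chi>::nat list \<Rightarrow> nat list \<Rightarrow> nat. (\<forall>x\<in>pwords t L 0. \<forall>w\<in>UNIV. \<chi> x w < r) \<longrightarrow>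
      (\<exists>G\<in>pwords t M N. \<forall>x\<in>pwords t L 0. \<forall>g1\<in>pwords t N 1. \<forall>g2\<in>pwords t N 1.
         length (const_prefix t g1) = length (const_prefix t g2) \<longrightarrow>
         \<chi> x (const_prefix t (pcomp t G g1)) = \<chi> x (const_prefix t (pcomp t G g2)))"
    using product_colouring[OF IH' UNIV_I finite_pwords] by blast
  show ?thesis unfolding prefix_by_length_def
  proof (intro exI[of _ "L + M"] allI impI)
    fix \<psi> :: "nat list \<Rightarrow> nat"
    assume bounded: "\<forall>w. \<psi> w < r"
    obtain G where G: "G \<in> pwords t M N"
      "\<forall>x\<in>pwords t L 0. \<forall>g1\<in>pwords t N 1. \<forall>g2\<in>pwords t N 1. length (const_prefix t g1) = length (const_prefix t g2) \<longrightarrow>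
         \<psi> (x @ const_prefix t (pcomp t G g1)) = \<psi> (x @ const_prefix t (pcomp t G g2))"
      using M[THEN spec, of "\<lambda>x y. \<psi> (x @ y)"] bounded by blast
    obtain l where l: "l \<in> pwords t L 1"
      "\<forall>g'\<in>pwords t N 1. \<exists>c. \<forall>a<t. \<psi> (pcomp t l [a] @ const_prefix t (pcomp t G g')) = c"
      using L[THEN spec, of "\<lambda>g' x. \<psi> (x @ const_prefix t (pcomp t G g'))"] bounded by blast
    have l_mono: "\<psi> (pcomp t l [a] @ const_prefix t (pcomp t G g')) = \<psi> (pcomp t l [0] @ const_prefix t (pcomp t G g'))"
      if "a < t" "g' \<in> pwords t N 1" for a g'
      using l(2) that t by metis
    have prefix_colour: "\<psi> (const_prefix t (pcomp t (l @ shift_vars t G) (a # g'))) =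
        \<psi> (pcomp t l [0] @ const_prefix t (pcomp t G g'))" if "a < t" "g' \<in> pwords t N 1" for a g'
      using l_mono[OF that] const_prefix_pcomp_line_const[OF l(1) that(1)] by simp
    show "\<exists>F\<in>pwords t (L + M) (Suc N). \<forall>g1\<in>pwords t (Suc N) 1. \<forall>g2\<in>pwords t (Suc N) 1.
       length (const_prefix t g1) = length (const_prefix t g2) \<longrightarrow>
       \<psi> (const_prefix t (pcomp t F g1)) = \<psi> (const_prefix t (pcomp t F g2))"
    proof (intro bexI[OF _ append_shift_vars_pwords[OF G(1) l(1)]] ballI impI)
      fix g1 g2 assume g1: "g1 \<in> pwords t (Suc N) 1" and g2: "g2 \<in> pwords t (Suc N) 1"
        and same_length: "length (const_prefix t g1) = length (const_prefix t g2)"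
      show "\<psi> (const_prefix t (pcomp t (l @ shift_vars t G) g1)) = \<psi> (const_prefix t (pcomp t (l @ shift_vars t G) g2))"
      proof (cases rule: pwords_1_same_prefix_length_cases[OF g1 g2 same_length])
        case (1 g1' g2')
        then show ?thesis using const_prefix_pcomp_line_var[OF l(1)] by simp
      next
        case (2 a1 g1' a2 g2')
        then have "\<psi> (pcomp t l [0] @ const_prefix t (pcomp t G g1')) =
            \<psi> (pcomp t l [0] @ const_prefix t (pcomp t G g2'))"
          using G(2) pcomp_line_letter[OF l(1) t] by blast
        then show ?thesis unfolding 2(1,4) prefix_colour[OF 2(2,3)] prefix_colour[OF 2(5,6)] .
      qed
    qed
  qed
qed

lemma prefix_by_length: "0 < t \<Longrightarrow> prefix_by_length t N r"
proof (induction N arbitrary: r)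
  case 0
  have "pwords t 0 1 = {}" unfolding pwords_1 by auto
  moreover have "[] \<in> pwords t 0 0" by (simp add: pwords_0)
  ultimately show ?case unfolding prefix_by_length_def by blast
next
  case (Suc N)
  then show ?case using prefix_by_length_Suc by blast
qed

lemma nat_discrete_ivt:
  assumes step: "\<And>j. f (Suc j) \<le> Suc (f j)" and "f 0 \<le> c" "c \<le> f i"
  shows "\<exists>j\<le>i. f j = c"
  using assms(3)
proof (induction i)
  case 0 then show ?case using assms(2) by auto
next
  case (Suc i)
  show ?case
  proof (cases "c \<le> f i")
    case True then show ?thesis using Suc.IH by (meson le_SucI)
  next
    case False
    then have "f (Suc i) = c" using Suc.prems step[of i] by linarith
    then show ?thesis by blast
  qed
qed

definition card_upto :: "nat set \<Rightarrow> nat \<Rightarrow> nat" where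
  "card_upto S i = card {s\<in>S. s \<le> i}"

lemma card_upto_Suc: "finite S \<Longrightarrow> card_upto S (Suc i) = card_upto S i + (if Suc i \<in> S then 1 else 0)"
proof -
  assume fS: "finite S"
  have "{s\<in>S. s \<le> Suc i} = {s\<in>S. s \<le> i} \<union> (if Suc i \<in> S then {Suc i} else {})"
    by (auto simp: le_Suc_eq)
  moreover have "Suc i \<notin> {s\<in>S. s \<le> i}" by auto
  ultimately show ?thesis unfolding card_upto_def using fS by (auto simp: card_insert_if)
qed

lemma card_upto_Suc_le: "finite S \<Longrightarrow> card_upto S (Suc j) \<le> Suc (card_upto S j)"
  using card_upto_Suc[of S j] by auto

lemma card_upto_0: "card_upto S 0 = (if 0 \<in> S then 1 else 0)"
proof -
  have "{s\<in>S. s \<le> 0} = (if 0 \<in> S then {0} else {})" by auto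
  then show ?thesis unfolding card_upto_def by simp
qed

lemma card_upto_le_card: "finite S \<Longrightarrow> card_upto S i \<le> card S"
  unfolding card_upto_def by (rule card_mono) auto

lemma card_upto_top: "S \<subseteq> {..<N} \<Longrightarrow> 0 < N \<Longrightarrow> card_upto S (N - 1) = card S"
  unfolding card_upto_def by (rule arg_cong[of _ _ card]) auto

lemma card_upto_not_mem: "finite S \<Longrightarrow> 0 < p \<Longrightarrow> p \<notin> S \<Longrightarrow> card_upto S p = card_upto S (p - 1)"
  using card_upto_Suc[of S "p - 1"] by simp

text \<open>The letter \<open>t - 1\<close> before the least element of \<open>S\<close>; from the \<open>j\<close>-th element of \<open>S\<close> on
  (counting from \<open>0\<close>), the variable \<open>t + j\<close>.\<close>

definition step_word :: "nat \<Rightarrow> nat set \<Rightarrow> nat \<Rightarrow> nat list" where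
  "step_word t S N = map (\<lambda>i. t + card_upto S i - 1) [0..<N]"

lemma step_word_pwords:
  assumes t: "0 < t" and S: "S \<subseteq> {..<N}" "card S = m" "0 < m"
  shows "step_word t S N \<in> pwords t N m"
proof (rule pwordsI)
  have fS: "finite S" using S(1) finite_subset by blast
  have N: "0 < N" using S card_gt_0_iff by fastforce
  show "length (step_word t S N) = N" unfolding step_word_def by simp
  show "x < t + m" if xin: "x \<in> set (step_word t S N)" for x
  proof -
    obtain i where "x = t + card_upto S i - 1" using xin unfolding step_word_def by auto
    moreover have "card_upto S i \<le> m" using card_upto_le_card[OF fS] S(2) by metis
    ultimately show ?thesis using t S(3) by linarith
  qed
  show "t + j \<in> set (step_word t S N)" if "j < m" for j
  proof -
    have "card_upto S 0 \<le> Suc j" using card_upto_0[of S] by auto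
    moreover have "Suc j \<le> card_upto S (N - 1)" using card_upto_top[OF S(1) N] S(2) that by simp
    ultimately obtain i where i: "i \<le> N - 1" "card_upto S i = Suc j"
      using nat_discrete_ivt[of "card_upto S" "Suc j" "N - 1", OF card_upto_Suc_le[OF fS]] by blast
    then have iN: "i < N" using N by simp
    then have "step_word t S N ! i = t + j" unfolding step_word_def using i(2) by simp
    moreover have "i < length (step_word t S N)" using iN unfolding step_word_def by simp
    ultimately show ?thesis by (metis nth_mem)
  qed
  show "vars_ordered t (step_word t S N)" unfolding vars_ordered_def
  proof (intro allI impI)
    fix i assume i: "i < length (step_word t S N)" "t < step_word t S N ! i"
    then have iN: "i < N" and ei: "step_word t S N ! i = t + card_upto S i - 1"
      unfolding step_word_def by auto
    then have c2: "2 \<le> card_upto S i" using i(2) by simp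
    have c0: "card_upto S 0 \<le> card_upto S i - 1" using card_upto_0[of S] c2 by auto
    obtain j where j: "j \<le> i" "card_upto S j = card_upto S i - 1"
      using nat_discrete_ivt[of "card_upto S", OF card_upto_Suc_le[OF fS] c0 diff_le_self] by blast
    then have ji: "j < i" using c2 by (cases "j = i") auto
    have "step_word t S N ! j = step_word t S N ! i - 1"
      unfolding step_word_def using ji iN j(2) c2 by simp
    moreover have "j < length (take i (step_word t S N))"
      using ji iN unfolding step_word_def by simp
    ultimately show "step_word t S N ! i - 1 \<in> set (take i (step_word t S N))"
      using ji by (metis nth_mem nth_take)
  qed
qed

lemma length_const_prefix_step_word:
  assumes t: "0 < t" and S: "S \<subseteq> {..<N}" "card S = m" "0 < m" and g: "g \<in> pwords t m 1"
  shows "length (const_prefix t (pcomp t (step_word t S N) g)) \<in> S"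
proof -
  have fS: "finite S" using S(1) finite_subset by blast
  have N: "0 < N" using S card_gt_0_iff by fastforce
  define x where "x = pcomp t (step_word t S N) g"
  have lx: "length x = N" unfolding x_def step_word_def by simp
  have lg: "length g = m" using g unfolding pwords_1 by auto
  define h where "h c = (if c = 0 then t - 1 else g ! (c - 1))" for c
  have xi: "x ! i = h (card_upto S i)" if "i < N" for i
  proof -
    have ei: "step_word t S N ! i = t + card_upto S i - 1"
      unfolding step_word_def using that by simp
    have li: "i < length (step_word t S N)" unfolding step_word_def using that by simp
    show ?thesis
    proof (cases "card_upto S i = 0")
      case True then show ?thesis unfolding x_def h_def nth_pcomp[OF li] ei using t by simp
    next
      case False
      then have "\<not> t + card_upto S i - 1 < t" by simp
      then show ?thesis unfolding x_def h_def nth_pcomp[OF li] ei using False by simp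
    qed
  qed
  have xpw: "x \<in> pwords t N 1" unfolding x_def using pcomp_pwords[OF step_word_pwords[OF t S] g] .
  then have "t \<in> set x" unfolding pwords_1 by auto
  then have pl: "length (const_prefix t x) < N" using length_const_prefix_less lx by metis
  define p where "p = length (const_prefix t x)"
  have np: "\<not> x ! p < t" using nth_length_const_prefix[of t x] pl lx unfolding p_def by simp
  show ?thesis
  proof (rule ccontr)
    assume pS: "length (const_prefix t (pcomp t (step_word t S N) g)) \<notin> S"
    then have pS': "p \<notin> S" unfolding p_def x_def .
    have c0: "card_upto S p \<noteq> 0"
    proof
      assume "card_upto S p = 0"
      then have "x ! p = t - 1" using xi[of p] pl unfolding p_def h_def by simp
      then show False using np t by simp
    qed
    have "p \<noteq> 0"
    proof
      assume "p = 0"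
      then show False using c0 pS' card_upto_0[of S] by simp
    qed
    then have "card_upto S p = card_upto S (p - 1)" using card_upto_not_mem[OF fS _ pS'] by simp
    then have "x ! (p - 1) = x ! p" using xi pl unfolding p_def by simp
    moreover have "x ! (p - 1) < t"
      using nth_const_prefix_less[of "p - 1" t x] \<open>p \<noteq> 0\<close> unfolding p_def by simp
    ultimately show False using np by simp
  qed
qed


lemma pigeonhole_fibre:
  assumes "\<kappa> \<in> {..<Suc (r * m)} \<rightarrow> {..<r}"
  obtains c S where "S \<subseteq> {..<Suc (r * m)}" "card S = m" "\<forall>q\<in>S. \<kappa> q = c"
proof -
  have "0 < r" using funcset_mem[OF assms, of 0] by auto
  then obtain c where "card {..<Suc (r * m)} \<le> card (\<kappa> -` {c} \<inter> {..<Suc (r * m)}) * card {..<r}"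
    using pigeonhole_card[OF assms] by auto
  then have "Suc (m * r) \<le> card (\<kappa> -` {c} \<inter> {..<Suc (r * m)}) * r" by (simp add: mult.commute)
  then have "m \<le> card (\<kappa> -` {c} \<inter> {..<Suc (r * m)})" by (simp add: Suc_le_eq)
  then obtain S where "S \<subseteq> \<kappa> -` {c} \<inter> {..<Suc (r * m)}" "card S = m"
    by (meson finite_Int finite_lessThan obtain_subset_with_card_n)
  then show thesis using that by blast
qed

definition prefix_line :: "nat \<Rightarrow> nat \<Rightarrow> nat \<Rightarrow> nat list" where
  "prefix_line t N q = replicate q 0 @ replicate (N - q) t"

lemma prefix_line_pwords: "0 < t \<Longrightarrow> q < N \<Longrightarrow> prefix_line t N q \<in> pwords t N 1"
  unfolding prefix_line_def pwords_1 by auto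

lemma length_const_prefix_prefix_line: "0 < t \<Longrightarrow> q < N \<Longrightarrow> length (const_prefix t (prefix_line t N q)) = q"
proof -
  assume "0 < t" "q < N"
  then have "set (replicate q 0) \<subseteq> {..<t}" "N - q = Suc (N - Suc q)" by auto
  then show ?thesis unfolding prefix_line_def by (simp add: const_prefix_append_consts const_prefix_Cons_var)
qed

text \<open>First make the colour of a prefix depend only on its length, for words with \<open>r \<cdot> m + 1\<close>
  possible prefix lengths; by pigeonhole, \<open>m\<close> of these lengths get the same colour, and
  \<open>step_word\<close> restricts to an \<open>m\<close>-dimensional subspace whose prefix lengths are among those.\<close>

theorem const_prefix_colour_constant:
  "\<exists>M. \<forall>\<psi>::nat list \<Rightarrow> nat. (\<forall>w. \<psi> w < r) \<longrightarrow>
     (\<exists>f\<in>pwords t M m. \<exists>c. \<forall>g\<in>pwords t m 1. \<psi> (const_prefix t (pcomp t f g)) = c)"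
proof (cases "t = 0 \<or> m = 0")
  case True
  then consider "t = 0" | "m = 0" by blast
  then show ?thesis
  proof cases
    case 1
    then have "const_prefix t w = []" for w unfolding const_prefix_def by (cases w) simp_all
    then show ?thesis unfolding ex_const_on_iff
      by (intro exI[of _ m] allI impI bexI[OF _ var_word_pwords]) simp
  next
    case 2
    have "pwords t 0 1 = {}" unfolding pwords_1 by auto
    then show ?thesis unfolding 2 using var_word_pwords[of t 0] by blast
  qed
next
  case False
  then have t: "0 < t" and m: "0 < m" by auto
  define N where "N = Suc (r * m)"
  obtain M where M: "\<forall>\<psi>::nat list \<Rightarrow> nat. (\<forall>w. \<psi> w < r) \<longrightarrow>
     (\<exists>F\<in>pwords t M N. \<forall>g1\<in>pwords t N 1. \<forall>g2\<in>pwords t N 1.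
        length (const_prefix t g1) = length (const_prefix t g2) \<longrightarrow>
        \<psi> (const_prefix t (pcomp t F g1)) = \<psi> (const_prefix t (pcomp t F g2)))"
    using prefix_by_length[OF t, of N r] unfolding prefix_by_length_def by blast
  show ?thesis
  proof (intro exI[of _ M] allI impI)
    fix \<psi> :: "nat list \<Rightarrow> nat"
    assume bounded: "\<forall>w. \<psi> w < r"
    then obtain F where F: "F \<in> pwords t M N"
      "\<forall>g1\<in>pwords t N 1. \<forall>g2\<in>pwords t N 1. length (const_prefix t g1) = length (const_prefix t g2) \<longrightarrow>
         \<psi> (const_prefix t (pcomp t F g1)) = \<psi> (const_prefix t (pcomp t F g2))"
      using M by blast
    define \<kappa> where "\<kappa> q = \<psi> (const_prefix t (pcomp t F (prefix_line t N q)))" for q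
    have \<kappa>: "\<psi> (const_prefix t (pcomp t F g)) = \<kappa> (length (const_prefix t g))" if "g \<in> pwords t N 1" for g
    proof -
      have q: "length (const_prefix t g) < N"
        using that length_const_prefix_less unfolding pwords_1 by fastforce
      show ?thesis unfolding \<kappa>_def
        using F(2) that prefix_line_pwords[OF t q] length_const_prefix_prefix_line[OF t q] by metis
    qed
    have "\<kappa> \<in> {..<N} \<rightarrow> {..<r}" using bounded unfolding \<kappa>_def by simp
    then obtain c S where S: "S \<subseteq> {..<N}" "card S = m" "\<forall>q\<in>S. \<kappa> q = c"
      unfolding N_def by (rule pigeonhole_fibre)
    have E: "step_word t S N \<in> pwords t N m" using step_word_pwords[OF t S(1,2) m] .
    show "\<exists>f\<in>pwords t M m. \<exists>c. \<forall>g\<in>pwords t m 1. \<psi> (const_prefix t (pcomp t f g)) = c"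
    proof (intro bexI[OF _ pcomp_pwords[OF F(1) E]] exI[of _ c] ballI)
      fix g assume g: "g \<in> pwords t m 1"
      have "length (const_prefix t (pcomp t (step_word t S N) g)) \<in> S"
        using length_const_prefix_step_word[OF t S(1,2) m g] .
      then show "\<psi> (const_prefix t (pcomp t (pcomp t F (step_word t S N)) g)) = c"
        using \<kappa>[OF pcomp_pwords[OF E g]] S(3) pcomp_pwords_assoc[OF F(1) E] by auto
    qed
  qed
qed

section \<open>The Graham--Rothschild theorem\<close>

lemma const_prefix_append_nonconst: "\<exists>v\<in>set x. \<not> v < t \<Longrightarrow> const_prefix t (x @ y) = const_prefix t x"
proof -
  assume "\<exists>v\<in>set x. \<not> v < t"
  then obtain v where "v \<in> set x" "\<not> v < t" by blast
  then show ?thesis unfolding const_prefix_def by (rule takeWhile_append1)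
qed

lemma const_prefix_take_append:
  assumes "length (const_prefix t g) < n" "n \<le> length g"
  shows "const_prefix t (take n g @ y) = const_prefix t g"
proof -
  have "g ! length (const_prefix t g) \<in> set (take n g)" "\<not> g ! length (const_prefix t g) < t"
    using assms nth_length_const_prefix[of t g]
    by (auto simp: in_set_conv_nth intro!: exI[of _ "length (const_prefix t g)"])
  then have "\<exists>v\<in>set (take n g). \<not> v < t" by blast
  then show ?thesis
    using const_prefix_append_nonconst[of "take n g" t] append_take_drop_id[of n g] by metis
qed

lemma first_var:
  assumes g: "g \<in> pwords t M (Suc k)"
  shows "length (const_prefix t g) < M" "g ! length (const_prefix t g) = t"
proof -
  have "t \<in> set g" using pwordsD(3)[OF g, of 0] by simp
  then show pl: "length (const_prefix t g) < M"
    using length_const_prefix_less pwordsD(1)[OF g] by metis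
  define p where "p = length (const_prefix t g)"
  have ge: "\<not> g ! p < t"
    using nth_length_const_prefix[of t g] pl pwordsD(1)[OF g] unfolding p_def by simp
  show "g ! length (const_prefix t g) = t"
  proof (rule ccontr)
    assume "g ! length (const_prefix t g) \<noteq> t"
    then have gt: "t < g ! p" using ge unfolding p_def by simp
    then have "g ! p - 1 \<in> set (take p g)"
      using pwordsD(4)[OF g] pl pwordsD(1)[OF g] unfolding vars_ordered_def p_def by simp
    then have "g ! p - 1 \<in> set (const_prefix t g)"
      using const_prefix_take[of t g] unfolding p_def by simp
    then have "g ! p - 1 < t" using set_const_prefix by blast
    then show False using gt by simp
  qed
qed

lemma pwords_split_const_prefix:
  assumes g: "g \<in> pwords t M (Suc k)"
  shows "g = const_prefix t g @ t # drop (Suc (length (const_prefix t g))) g"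
proof -
  have pl: "length (const_prefix t g) < length g" using first_var(1)[OF g] pwordsD(1)[OF g] by simp
  have "g = take (length (const_prefix t g)) g @ g ! length (const_prefix t g) #
      drop (Suc (length (const_prefix t g))) g"
    using pl by (simp add: id_take_nth_drop)
  then show ?thesis using first_var(2)[OF g] const_prefix_take[of t g] by simp
qed

text \<open>A word over the alphabet \<open>{..<t + Q + 1}\<close> describes the tail of a word \<open>b @ t # _\<close> whose
  constant prefix \<open>b\<close> has length \<open>Q\<close>: the letter \<open>t + i\<close> stands for \<open>b ! i\<close> if \<open>i < Q\<close>, and
  \<open>t + Q\<close> for the first variable.\<close>

definition fill_prefix :: "nat \<Rightarrow> nat \<Rightarrow> nat list \<Rightarrow> nat \<Rightarrow> nat" where
  "fill_prefix t Q b y = (if y < t then y else if y < t + Q then b ! (y - t) else y - Q)"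

definition raise_vars :: "nat \<Rightarrow> nat \<Rightarrow> nat \<Rightarrow> nat" where
  "raise_vars t Q z = (if z < t then z else z + Q)"

lemma vars_ordered_fill_prefix:
  assumes b: "b \<in> pwords t Q 0" and v: "v \<in> pwords (t + Q + 1) N k"
  shows "vars_ordered t (b @ t # map (fill_prefix t Q b) v)"
  unfolding vars_ordered_append
proof (intro conjI allI impI)
  have lb: "length b = Q" and bs: "set b \<subseteq> {..<t}" using b unfolding pwords_0 by auto
  show "vars_ordered t b" using bs by (intro vars_ordered_single_var) auto
  fix i assume i: "i < length (t # map (fill_prefix t Q b) v)" "t < (t # map (fill_prefix t Q b) v) ! i"
  then obtain i' where i': "i = Suc i'" "i' < length v" by (cases i) auto
  define y where "y = v ! i'"
  have val: "(t # map (fill_prefix t Q b) v) ! i = fill_prefix t Q b y"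
    using i' unfolding y_def by simp
  have "y \<in> set v" using i' unfolding y_def by simp
  have bl: "b ! (y - t) < t" if "t \<le> y" "y < t + Q" using that bs lb by (simp add: subset_iff)
  have yge: "t + Q + 1 \<le> y"
  proof (rule ccontr)
    assume "\<not> t + Q + 1 \<le> y"
    then have "fill_prefix t Q b y \<le> t" unfolding fill_prefix_def using bl by auto
    then show False using i(2) val by simp
  qed
  then have sy: "fill_prefix t Q b y = y - Q" unfolding fill_prefix_def by simp
  show "(t # map (fill_prefix t Q b) v) ! i - 1 \<in> set b \<union> set (take i (t # map (fill_prefix t Q b) v))"
  proof (cases "y = t + Q + 1")
    case True
    then have "(t # map (fill_prefix t Q b) v) ! i - 1 = t" using val sy by simp
    then show ?thesis using i' by simp
  next
    case False
    then have "y - 1 \<in> set (take i' v)"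
      using pwordsD(4)[OF v] i' yge unfolding vars_ordered_def y_def by auto
    then have "fill_prefix t Q b (y - 1) \<in> set (take i' (map (fill_prefix t Q b) v))"
      by (simp add: take_map)
    moreover have "fill_prefix t Q b (y - 1) = fill_prefix t Q b y - 1"
      using yge False unfolding fill_prefix_def by auto
    ultimately show ?thesis using val i' by simp
  qed
qed

lemma fill_prefix_pwords:
  assumes b: "b \<in> pwords t Q 0" and v: "v \<in> pwords (t + Q + 1) N k"
  shows "b @ t # map (fill_prefix t Q b) v \<in> pwords t (Q + 1 + N) (Suc k)"
proof (rule pwordsI)
  have lb: "length b = Q" and bs: "set b \<subseteq> {..<t}" using b unfolding pwords_0 by auto
  show "length (b @ t # map (fill_prefix t Q b) v) = Q + 1 + N" using lb pwordsD(1)[OF v] by simp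
  show "x < t + Suc k" if xin: "x \<in> set (b @ t # map (fill_prefix t Q b) v)" for x
  proof -
    consider "x \<in> set b" | "x = t" | y where "y \<in> set v" "x = fill_prefix t Q b y" using xin by auto
    then show ?thesis
    proof cases
      case 1 then show ?thesis using bs by auto
    next
      case 2 then show ?thesis by simp
    next
      case 3
      have "y < t + Q + 1 + k" using pwordsD(2)[OF v 3(1)] .
      moreover have "b ! (y - t) < t" if "t \<le> y" "y < t + Q"
        using that bs lb by (simp add: subset_iff)
      ultimately show ?thesis using 3(2) unfolding fill_prefix_def by auto
    qed
  qed
  show "t + j \<in> set (b @ t # map (fill_prefix t Q b) v)" if "j < Suc k" for j
  proof (cases j)
    case 0 then show ?thesis by simp
  next
    case (Suc j')
    then have "t + Q + 1 + j' \<in> set v" using pwordsD(3)[OF v, of j'] that by simp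
    moreover have "fill_prefix t Q b (t + Q + 1 + j') = t + j" unfolding fill_prefix_def Suc by simp
    ultimately show ?thesis by (metis image_eqI list.set_map set_subset_Cons subsetD Un_iff set_append)
  qed
  show "vars_ordered t (b @ t # map (fill_prefix t Q b) v)" using vars_ordered_fill_prefix[OF b v] .
qed

lemma pcomp_var_word_take: "Suc Q \<le> length g \<Longrightarrow> pcomp t (var_word t (Suc Q)) g = take (Suc Q) g"
  unfolding pcomp_def var_word_def by (rule nth_equalityI) (auto simp del: upt_Suc)

lemma var_word_append_pwords:
  assumes U: "U \<in> pwords (t + Q + 1) N m'"
  shows "var_word t (Q + 1) @ U \<in> pwords t (Q + 1 + N) (Q + 1 + m')"
proof (rule pwordsI)
  have I: "var_word t (Q + 1) \<in> pwords t (Q + 1) (Q + 1)" by (rule var_word_pwords)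
  show "length (var_word t (Q + 1) @ U) = Q + 1 + N" using pwordsD(1)[OF I] pwordsD(1)[OF U] by simp
  show "x < t + (Q + 1 + m')" if "x \<in> set (var_word t (Q + 1) @ U)" for x
    using that pwordsD(2)[OF I] pwordsD(2)[OF U] by fastforce
  show "t + j \<in> set (var_word t (Q + 1) @ U)" if "j < Q + 1 + m'" for j
  proof (cases "j < Q + 1")
    case True then show ?thesis using pwordsD(3)[OF I] by auto
  next
    case False
    then have "t + Q + 1 + (j - (Q + 1)) \<in> set U"
      using pwordsD(3)[OF U, of "j - (Q+1)"] that by simp
    then show ?thesis using False by simp
  qed
  show "vars_ordered t (var_word t (Q + 1) @ U)" unfolding vars_ordered_append
  proof
    show "vars_ordered t (var_word t (Q + 1))" using pwordsD(4)[OF I] .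
    show "\<forall>i<length U. t < U ! i \<longrightarrow> U ! i - 1 \<in> set (var_word t (Q + 1)) \<union> set (take i U)"
    proof (intro allI impI)
      fix i assume i: "i < length U" "t < U ! i"
      show "U ! i - 1 \<in> set (var_word t (Q + 1)) \<union> set (take i U)"
      proof (cases "U ! i \<le> t + Q + 1")
        case True
        then have "U ! i - 1 = t + (U ! i - 1 - t)" "U ! i - 1 - t < Q + 1" using i(2) by auto
        then have "U ! i - 1 \<in> set (var_word t (Q + 1))"
          using pwordsD(3)[OF I, of "U ! i - 1 - t"] by simp
        then show ?thesis by simp
      next
        case False
        then show ?thesis using pwordsD(4)[OF U] i(1) unfolding vars_ordered_def by auto
      qed
    qed
  qed
qed

lemma pcomp_var_word_append:
  assumes U: "U \<in> pwords (t + Q + 1) N m'" and b: "length b = Q" and g': "length g' = m'"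
  shows "pcomp t (var_word t (Q + 1) @ U) (b @ t # g') = b @ t # map (fill_prefix t Q b) (pcomp (t + Q + 1) U (map (raise_vars t Q) g'))"
proof -
  have "pcomp t (var_word t (Q + 1)) (b @ t # g') = take (Suc Q) (b @ t # g')"
    using pcomp_var_word_take[of Q "b @ t # g'" t] b by simp
  also have "\<dots> = b @ [t]" using b by simp
  finally have e1: "pcomp t (var_word t (Q + 1)) (b @ t # g') = b @ [t]" .
  have e2: "pcomp t U (b @ t # g') = map (fill_prefix t Q b) (pcomp (t + Q + 1) U (map (raise_vars t Q) g'))"
    unfolding pcomp_def map_map
  proof (rule map_cong[OF refl])
    fix y assume y: "y \<in> set U"
    have yb: "y < t + Q + 1 + m'" using pwordsD(2)[OF U y] .
    show "(if y < t then y else (b @ t # g') ! (y - t)) =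
      (fill_prefix t Q b \<circ> (\<lambda>x. if x < t + Q + 1 then x else map (raise_vars t Q) g' ! (x - (t + Q + 1)))) y"
    proof -
      consider "y < t" | "t \<le> y" "y < t + Q" | "y = t + Q" | "t + Q + 1 \<le> y" by linarith
      then show ?thesis
      proof cases
        case 1 then show ?thesis unfolding fill_prefix_def by simp
      next
        case 2
        then have "y - t < Q" by simp
        then show ?thesis unfolding fill_prefix_def using b 2 by (simp add: nth_append)
      next
        case 3 then show ?thesis unfolding fill_prefix_def using b by (simp add: nth_append)
      next
        case 4
        define z where "z = g' ! (y - (t + Q + 1))"
        have il: "y - (t + Q + 1) < length g'" using yb g' 4 by simp
        have yy: "y - t = length b + Suc (y - (t + Q + 1))" using b 4 by simp
        have "(b @ t # g') ! (y - t) = z"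
          unfolding z_def yy by (simp only: nth_append_length_plus nth_Cons_Suc)
        moreover have "map (raise_vars t Q) g' ! (y - (t + Q + 1)) = raise_vars t Q z"
          unfolding z_def using il by simp
        moreover have "fill_prefix t Q b (raise_vars t Q z) = z"
          unfolding fill_prefix_def raise_vars_def by auto
        ultimately show ?thesis using 4 by simp
      qed
    qed
  qed
  show ?thesis using e1 e2 by simp
qed

lemma raise_vars_pwords:
  assumes g: "b @ t # g' \<in> pwords t M' (Suc k)" and b: "set b \<subseteq> {..<t}" "length b = Q"
  shows "map (raise_vars t Q) g' \<in> pwords (t + Q + 1) (length g') k"
proof (rule pwordsI)
  show "length (map (raise_vars t Q) g') = length g'" by simp
  show "x < t + Q + 1 + k" if xin: "x \<in> set (map (raise_vars t Q) g')" for x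
  proof -
    obtain z where z: "z \<in> set g'" "x = raise_vars t Q z" using xin by auto
    have "z < t + Suc k" using pwordsD(2)[OF g] z(1) by simp
    then show ?thesis using z(2) unfolding raise_vars_def by auto
  qed
  show "t + Q + 1 + j \<in> set (map (raise_vars t Q) g')" if "j < k" for j
  proof -
    have "t + Suc j \<in> set (b @ t # g')" using pwordsD(3)[OF g, of "Suc j"] that by simp
    moreover have "t + Suc j \<notin> set b" using b by auto
    ultimately have "t + Suc j \<in> set g'" by simp
    moreover have "raise_vars t Q (t + Suc j) = t + Q + 1 + j" unfolding raise_vars_def by simp
    ultimately show ?thesis by (metis image_eqI set_map)
  qed
  show "vars_ordered (t + Q + 1) (map (raise_vars t Q) g')" unfolding vars_ordered_def
  proof (intro allI impI)
    fix i assume i: "i < length (map (raise_vars t Q) g')" "t + Q + 1 < map (raise_vars t Q) g' ! i"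
    define z where "z = g' ! i"
    have il: "i < length g'" using i by simp
    have rz: "map (raise_vars t Q) g' ! i = raise_vars t Q z" unfolding z_def using il by simp
    have zt: "t + 1 < z" using i(2) rz unfolding raise_vars_def by (auto split: if_splits)
    have pos: "(b @ t # g') ! (Q + 1 + i) = z" unfolding z_def using b by (simp add: nth_append)
    have li: "Q + 1 + i < length (b @ t # g')" using il b by simp
    have "t < (b @ t # g') ! (Q + 1 + i)" using pos zt by simp
    then have "(b @ t # g') ! (Q + 1 + i) - 1 \<in> set (take (Q + 1 + i) (b @ t # g'))"
      using pwordsD(4)[OF g] li unfolding vars_ordered_def by blast
    then have "z - 1 \<in> set (take (Q + 1 + i) (b @ t # g'))" using pos by simp
    moreover have "take (Q + 1 + i) (b @ t # g') = b @ t # take i g'" using b by simp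
    ultimately have "z - 1 \<in> set (b @ t # take i g')" by metis
    moreover have "z - 1 \<notin> set b" "z - 1 \<noteq> t" using b zt by auto
    ultimately have "z - 1 \<in> set (take i g')" by simp
    then have "raise_vars t Q (z - 1) \<in> set (take i (map (raise_vars t Q) g'))"
      by (simp add: take_map)
    moreover have "raise_vars t Q (z - 1) = raise_vars t Q z - 1"
      using zt unfolding raise_vars_def by auto
    ultimately show "map (raise_vars t Q) g' ! i - 1 \<in> set (take i (map (raise_vars t Q) g'))"
      using rz by simp
  qed
qed

lemma const_prefix_pcomp_var_word_append:
  assumes "length (const_prefix t g) < Q" "Q < length g"
  shows "const_prefix t (pcomp t (var_word t (Q + 1) @ U) g) = const_prefix t g"
  using assms pcomp_var_word_take[of Q g t] const_prefix_take_append[of t g "Suc Q"] by simp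

lemma pcomp_var_word_append_split:
  assumes U: "U \<in> pwords (t + Q + 1) N m'" and g: "g \<in> pwords t (Q + 1 + m') (Suc k)"
    and Q: "length (const_prefix t g) = Q"
  shows "\<exists>h\<in>pwords (t + Q + 1) m' k. pcomp t (var_word t (Q + 1) @ U) g =
     const_prefix t g @ t # map (fill_prefix t Q (const_prefix t g)) (pcomp (t + Q + 1) U h)"
proof -
  define g' where "g' = drop (Suc Q) g"
  have split: "g = const_prefix t g @ t # g'"
    using pwords_split_const_prefix[OF g] Q unfolding g'_def by simp
  have "length g = Q + 1 + m'" using pwordsD(1)[OF g] .
  then have g': "length g' = m'" using arg_cong[OF split, of length] Q by simp
  have "const_prefix t g @ t # g' \<in> pwords t (Q + 1 + m') (Suc k)" using g split by simp
  from raise_vars_pwords[OF this set_const_prefix Q]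
  have "map (raise_vars t Q) g' \<in> pwords (t + Q + 1) m' k" unfolding g' .
  moreover have "pcomp t (var_word t (Q + 1) @ U) g = const_prefix t g @ t #
      map (fill_prefix t Q (const_prefix t g)) (pcomp (t + Q + 1) U (map (raise_vars t Q) g'))"
    using pcomp_var_word_append[OF U Q g'] split by simp
  ultimately show ?thesis by blast
qed

definition prefix_determined :: "nat \<Rightarrow> nat \<Rightarrow> (nat list \<Rightarrow> nat) \<Rightarrow> nat list \<Rightarrow> nat \<Rightarrow> nat \<Rightarrow> bool" where
  "prefix_determined t k \<chi> f M Q \<longleftrightarrow> (\<forall>g1\<in>pwords t M (Suc k). \<forall>g2\<in>pwords t M (Suc k).
     const_prefix t g1 = const_prefix t g2 \<longrightarrow> length (const_prefix t g1) < Q \<longrightarrow>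
     \<chi> (pcomp t f g1) = \<chi> (pcomp t f g2))"

text \<open>Extending the prefix length \<open>Q\<close> by one: the induction hypothesis for \<open>k\<close>, over the alphabet
  \<open>{..<t + Q + 1}\<close>, provides the tail \<open>U\<close> of a word \<open>var_word t (Q + 1) @ U\<close> on which the colour
  depends only on the prefix for every one of the finitely many prefixes of length \<open>Q\<close> at once.\<close>

lemma prefix_determined_step:
  assumes IH: "\<And>t' m' r'. GR t' k m' r'" and M': "Q + 1 \<le> M'"
  shows "\<exists>M. Q + 1 \<le> M \<and> (\<forall>\<chi> n f. (\<forall>w\<in>pwords t n (Suc k). \<chi> w < r) \<longrightarrow> f \<in> pwords t n M \<longrightarrow>
     prefix_determined t k \<chi> f M Q \<longrightarrow> (\<exists>f'\<in>pwords t n M'. prefix_determined t k \<chi> f' M' (Suc Q)))"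
proof -
  define t' where "t' = t + Q + 1"
  define m' where "m' = M' - (Q + 1)"
  have M'_eq: "M' = Q + 1 + m'" using M' unfolding m'_def by simp
  obtain N where N: "\<forall>\<Psi>::nat list \<Rightarrow> nat list \<Rightarrow> nat. (\<forall>b\<in>pwords t Q 0. \<forall>v\<in>pwords t' N k. \<Psi> b v < r) \<longrightarrow>
      (\<exists>U\<in>pwords t' N m'. \<forall>b\<in>pwords t Q 0. \<exists>c. \<forall>h\<in>pwords t' m' k. \<Psi> b (pcomp t' U h) = c)"
    using GR_product_colouring[OF IH finite_pwords] by blast
  show ?thesis
  proof (intro exI[of _ "Q + 1 + N"] conjI allI impI)
    fix \<chi> n f
    assume bounded: "\<forall>w\<in>pwords t n (Suc k). \<chi> w < r" and f: "f \<in> pwords t n (Q + 1 + N)"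
      and H: "prefix_determined t k \<chi> f (Q + 1 + N) Q"
    have "\<forall>b\<in>pwords t Q 0. \<forall>v\<in>pwords t' N k. \<chi> (pcomp t f (b @ t # map (fill_prefix t Q b) v)) < r"
      using bounded pcomp_pwords[OF f fill_prefix_pwords] unfolding t'_def by blast
    then obtain U where U: "U \<in> pwords t' N m'" "\<forall>b\<in>pwords t Q 0. \<exists>c. \<forall>h\<in>pwords t' m' k.
        \<chi> (pcomp t f (b @ t # map (fill_prefix t Q b) (pcomp t' U h))) = c"
      using N[THEN spec, of "\<lambda>b v. \<chi> (pcomp t f (b @ t # map (fill_prefix t Q b) v))"] by blast
    define E where "E = var_word t (Q + 1) @ U"
    have E: "E \<in> pwords t (Q + 1 + N) M'"
      unfolding E_def M'_eq using var_word_append_pwords U(1) unfolding t'_def by blast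
    have "prefix_determined t k \<chi> (pcomp t f E) M' (Suc Q)" unfolding prefix_determined_def
    proof (intro ballI impI)
      fix g1 g2 assume g1: "g1 \<in> pwords t M' (Suc k)" and g2: "g2 \<in> pwords t M' (Suc k)"
        and same_prefix: "const_prefix t g1 = const_prefix t g2"
        and short: "length (const_prefix t g1) < Suc Q"
      have lg: "length g1 = M'" "length g2 = M'" using g1 g2 by (simp_all add: pwordsD(1))
      show "\<chi> (pcomp t (pcomp t f E) g1) = \<chi> (pcomp t (pcomp t f E) g2)"
        unfolding pcomp_pwords_assoc[OF f E]
      proof (cases "length (const_prefix t g1) < Q")
        case True
        then have "const_prefix t (pcomp t E g1) = const_prefix t (pcomp t E g2)"
          "length (const_prefix t (pcomp t E g1)) < Q"
          using const_prefix_pcomp_var_word_append[of t _ Q] lg M' same_prefix unfolding E_def by auto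
        then show "\<chi> (pcomp t f (pcomp t E g1)) = \<chi> (pcomp t f (pcomp t E g2))"
          using H pcomp_pwords[OF E g1] pcomp_pwords[OF E g2] unfolding prefix_determined_def by blast
      next
        case False
        define b where "b = const_prefix t g1"
        have Q: "length (const_prefix t g1) = Q" "length (const_prefix t g2) = Q"
          using False short same_prefix by auto
        obtain h1 where h1: "h1 \<in> pwords t' m' k"
          "pcomp t E g1 = b @ t # map (fill_prefix t Q b) (pcomp t' U h1)"
          using pcomp_var_word_append_split[OF U(1)[unfolded t'_def] g1[unfolded M'_eq] Q(1)]
          unfolding E_def b_def t'_def by blast
        obtain h2 where h2: "h2 \<in> pwords t' m' k"
          "pcomp t E g2 = const_prefix t g2 @ t # map (fill_prefix t Q (const_prefix t g2)) (pcomp t' U h2)"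
          using pcomp_var_word_append_split[OF U(1)[unfolded t'_def] g2[unfolded M'_eq] Q(2)]
          unfolding E_def t'_def by blast
        have "b \<in> pwords t Q 0" using set_const_prefix Q unfolding b_def pwords_0 by auto
        then have "\<chi> (pcomp t f (b @ t # map (fill_prefix t Q b) (pcomp t' U h1))) =
            \<chi> (pcomp t f (b @ t # map (fill_prefix t Q b) (pcomp t' U h2)))"
          using U(2) h1(1) h2(1) by metis
        then show "\<chi> (pcomp t f (pcomp t E g1)) = \<chi> (pcomp t f (pcomp t E g2))"
          unfolding h1(2) h2(2) b_def same_prefix .
      qed
    qed
    then show "\<exists>f'\<in>pwords t n M'. prefix_determined t k \<chi> f' M' (Suc Q)"
      using pcomp_pwords[OF f E] by blast
  qed simp
qed

lemma prefix_determined_iter: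
  assumes IH: "\<And>t' m' r'. GR t' k m' r'" and "Q + d \<le> M'"
  shows "\<exists>M. Q \<le> M \<and> (\<forall>\<chi> n f. (\<forall>w\<in>pwords t n (Suc k). \<chi> w < r) \<longrightarrow> f \<in> pwords t n M \<longrightarrow>
     prefix_determined t k \<chi> f M Q \<longrightarrow> (\<exists>f'\<in>pwords t n M'. prefix_determined t k \<chi> f' M' (Q + d)))"
  using assms(2)
proof (induction d arbitrary: Q)
  case 0
  then show ?case by (intro exI[of _ M']) auto
next
  case (Suc d)
  then obtain M1 where M1: "Q + 1 \<le> M1" "\<forall>\<chi> n f. (\<forall>w\<in>pwords t n (Suc k). \<chi> w < r) \<longrightarrow> f \<in> pwords t n M1 \<longrightarrow>
      prefix_determined t k \<chi> f M1 (Q + 1) \<longrightarrow> (\<exists>f'\<in>pwords t n M'. prefix_determined t k \<chi> f' M' (Q + 1 + d))"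
    using Suc.IH[of "Q + 1"] by auto
  obtain M where M: "Q + 1 \<le> M" "\<forall>\<chi> n f. (\<forall>w\<in>pwords t n (Suc k). \<chi> w < r) \<longrightarrow> f \<in> pwords t n M \<longrightarrow>
      prefix_determined t k \<chi> f M Q \<longrightarrow> (\<exists>f'\<in>pwords t n M1. prefix_determined t k \<chi> f' M1 (Suc Q))"
    using prefix_determined_step[OF IH M1(1)] by blast
  have "\<exists>f'\<in>pwords t n M'. prefix_determined t k \<chi> f' M' (Q + Suc d)"
    if bounded: "\<forall>w\<in>pwords t n (Suc k). \<chi> w < r" and f: "f \<in> pwords t n M" and H: "prefix_determined t k \<chi> f M Q"
    for \<chi> n f
  proof -
    obtain f1 where "f1 \<in> pwords t n M1" "prefix_determined t k \<chi> f1 M1 (Q + 1)"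
      using M(2)[rule_format, OF bounded[rule_format] f H] by auto
    then show ?thesis using M1(2) bounded by auto
  qed
  then show ?case using M(1) by (intro exI[of _ M]) auto
qed

lemma prefix_determined_exists:
  assumes IH: "\<And>t' m' r'. GR t' k m' r'"
  shows "\<exists>n. \<forall>\<chi>::nat list \<Rightarrow> nat. (\<forall>w\<in>pwords t n (Suc k). \<chi> w < r) \<longrightarrow> (\<exists>f\<in>pwords t n M.
     \<forall>g1\<in>pwords t M (Suc k). \<forall>g2\<in>pwords t M (Suc k). const_prefix t g1 = const_prefix t g2 \<longrightarrow>
       \<chi> (pcomp t f g1) = \<chi> (pcomp t f g2))"
proof -
  obtain N where N: "\<forall>\<chi> n f. (\<forall>w\<in>pwords t n (Suc k). \<chi> w < r) \<longrightarrow> f \<in> pwords t n N \<longrightarrow>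
      prefix_determined t k \<chi> f N 0 \<longrightarrow> (\<exists>f'\<in>pwords t n M. prefix_determined t k \<chi> f' M M)"
    using prefix_determined_iter[OF IH, of 0 M M t r] by auto
  have start: "prefix_determined t k \<chi> (var_word t N) N 0" for \<chi> unfolding prefix_determined_def by simp
  show ?thesis
  proof (intro exI[of _ N] allI impI)
    fix \<chi> :: "nat list \<Rightarrow> nat" assume "\<forall>w\<in>pwords t N (Suc k). \<chi> w < r"
    then obtain f where "f \<in> pwords t N M" "prefix_determined t k \<chi> f M M"
      using N var_word_pwords start by blast
    then show "\<exists>f\<in>pwords t N M. \<forall>g1\<in>pwords t M (Suc k). \<forall>g2\<in>pwords t M (Suc k).
        const_prefix t g1 = const_prefix t g2 \<longrightarrow> \<chi> (pcomp t f g1) = \<chi> (pcomp t f g2)"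
      using first_var(1) unfolding prefix_determined_def by blast
  qed
qed

definition collapse_vars :: "nat \<Rightarrow> nat list \<Rightarrow> nat list" where
  "collapse_vars t g = map (\<lambda>x. if x < t then x else t) g"

lemma collapse_vars_pwords: "g \<in> pwords t m (Suc k) \<Longrightarrow> collapse_vars t g \<in> pwords t m 1"
proof -
  assume g: "g \<in> pwords t m (Suc k)"
  have "t \<in> set g" using pwordsD(3)[OF g, of 0] by simp
  then have "t \<in> set (collapse_vars t g)" unfolding collapse_vars_def by (force simp: image_iff)
  then show ?thesis unfolding pwords_1 collapse_vars_def using pwordsD(1)[OF g] by auto
qed

lemma const_prefix_pcomp_collapse_vars:
  assumes "set f \<subseteq> {..<t + length g}"
  shows "const_prefix t (pcomp t f (collapse_vars t g)) = const_prefix t (pcomp t f g)"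
proof -
  have "pcomp t f (collapse_vars t g) = map (\<lambda>x. if x < t then x else t) (pcomp t f g)"
    unfolding pcomp_def collapse_vars_def using assms by (auto simp: subset_iff intro!: map_cong)
  moreover have "const_prefix t (map (\<lambda>x. if x < t then x else t) w) = const_prefix t w" for w
    by (induction w) (auto simp: const_prefix_def)
  ultimately show ?thesis by simp
qed

text \<open>Make the colour of \<open>f0 \<cdot> g\<close> depend only on the constant prefix of \<open>g\<close>, then make the induced
  colouring of prefixes constant on the prefixes of \<open>f1 \<cdot> g\<close>; these are the prefixes of
  \<open>f1 \<cdot> collapse_vars t g\<close>, a word with one variable.\<close>

lemma GR_Suc:
  assumes IH: "\<And>t m r. GR t k m r"
  shows "GR t (Suc k) m r"
proof -
  obtain M where M: "\<forall>\<psi>::nat list \<Rightarrow> nat. (\<forall>w. \<psi> w < Suc r) \<longrightarrow>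
      (\<exists>f\<in>pwords t M m. \<exists>c. \<forall>g\<in>pwords t m 1. \<psi> (const_prefix t (pcomp t f g)) = c)"
    using const_prefix_colour_constant by blast
  obtain n where n: "\<forall>\<chi>::nat list \<Rightarrow> nat. (\<forall>w\<in>pwords t n (Suc k). \<chi> w < r) \<longrightarrow> (\<exists>f\<in>pwords t n M.
      \<forall>g1\<in>pwords t M (Suc k). \<forall>g2\<in>pwords t M (Suc k). const_prefix t g1 = const_prefix t g2 \<longrightarrow>
        \<chi> (pcomp t f g1) = \<chi> (pcomp t f g2))"
    using prefix_determined_exists[OF IH] by blast
  show ?thesis unfolding GR_def
  proof (intro exI[of _ n] allI impI)
    fix \<chi> :: "nat list \<Rightarrow> nat" assume bounded: "\<forall>w\<in>pwords t n (Suc k). \<chi> w < r"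
    then obtain f0 where f0: "f0 \<in> pwords t n M" "\<forall>g1\<in>pwords t M (Suc k). \<forall>g2\<in>pwords t M (Suc k).
        const_prefix t g1 = const_prefix t g2 \<longrightarrow> \<chi> (pcomp t f0 g1) = \<chi> (pcomp t f0 g2)"
      using n by blast
    define \<psi> where "\<psi> b = (if \<exists>g\<in>pwords t M (Suc k). const_prefix t g = b
      then \<chi> (pcomp t f0 (SOME g. g \<in> pwords t M (Suc k) \<and> const_prefix t g = b)) else r)" for b
    have \<psi>: "\<psi> (const_prefix t g) = \<chi> (pcomp t f0 g)" if g: "g \<in> pwords t M (Suc k)" for g
    proof -
      have ex: "\<exists>g'. g' \<in> pwords t M (Suc k) \<and> const_prefix t g' = const_prefix t g" using g by blast
      have "\<chi> (pcomp t f0 (SOME g'. g' \<in> pwords t M (Suc k) \<and> const_prefix t g' = const_prefix t g)) =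
          \<chi> (pcomp t f0 g)"
        using ex by (rule someI2_ex) (use f0(2) g in blast)
      moreover have "\<exists>g'\<in>pwords t M (Suc k). const_prefix t g' = const_prefix t g" using g by blast
      ultimately show ?thesis unfolding \<psi>_def by simp
    qed
    have "\<psi> b < Suc r" for b
    proof (cases "\<exists>g\<in>pwords t M (Suc k). const_prefix t g = b")
      case True
      then obtain g where "g \<in> pwords t M (Suc k)" "b = const_prefix t g" by blast
      then show ?thesis using \<psi> bounded pcomp_pwords[OF f0(1)] by (simp add: less_Suc_eq)
    qed (simp add: \<psi>_def)
    then obtain f1 c where f1: "f1 \<in> pwords t M m" "\<forall>g\<in>pwords t m 1. \<psi> (const_prefix t (pcomp t f1 g)) = c"
      using M by blast
    show "\<exists>f\<in>pwords t n m. \<exists>c. \<forall>g\<in>pwords t m (Suc k). \<chi> (pcomp t f g) = c"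
    proof (intro bexI[OF _ pcomp_pwords[OF f0(1) f1(1)]] exI[of _ c] ballI)
      fix g assume g: "g \<in> pwords t m (Suc k)"
      have "set f1 \<subseteq> {..<t + length g}" using pwordsD(2)[OF f1(1)] pwordsD(1)[OF g] by auto
      then have "\<chi> (pcomp t f0 (pcomp t f1 g)) = \<psi> (const_prefix t (pcomp t f1 (collapse_vars t g)))"
        using \<psi>[OF pcomp_pwords[OF f1(1) g]] const_prefix_pcomp_collapse_vars by simp
      then show "\<chi> (pcomp t (pcomp t f0 f1) g) = c"
        using f1(2) collapse_vars_pwords[OF g] pcomp_pwords_assoc[OF f0(1) f1(1)] by simp
    qed
  qed
qed

theorem graham_rothschild: "GR t k m r"
proof (induction k arbitrary: t m r)
  case 0
  show ?case using hales_jewett_subspace .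
next
  case (Suc k)
  then show ?case using GR_Suc by blast
qed

section \<open>Boolean matrices as parameter words over the empty alphabet\<close>

definition first_occ :: "nat list \<Rightarrow> nat \<Rightarrow> nat" where
  "first_occ w j = (LEAST i. i < length w \<and> w!i = j)"

lemma first_occ:
  assumes "j \<in> set w"
  shows "first_occ w j < length w" "w ! (first_occ w j) = j"
proof -
  have ex: "\<exists>i. i < length w \<and> w!i = j" using assms by (auto simp: in_set_conv_nth)
  show "first_occ w j < length w" "w ! (first_occ w j) = j"
    using LeastI_ex[OF ex] unfolding first_occ_def by auto
qed

lemma first_occ_le: "i < length w \<Longrightarrow> w!i = j \<Longrightarrow> first_occ w j \<le> i"
  unfolding first_occ_def by (rule Least_le) simp

lemma first_occ_inj: "j \<in> set w \<Longrightarrow> j' \<in> set w \<Longrightarrow> first_occ w j = first_occ w j' \<Longrightarrow> j = j'"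
  using first_occ(2) by metis

lemma first_occ_map:
  assumes "inj_on q (set w)" "j \<in> set w"
  shows "first_occ (map q w) (q j) = first_occ w j"
proof -
  have "(\<lambda>i. i < length (map q w) \<and> map q w ! i = q j) = (\<lambda>i. i < length w \<and> w ! i = j)"
  proof
    fix i show "(i < length (map q w) \<and> map q w ! i = q j) = (i < length w \<and> w ! i = j)"
      using assms by (auto simp: inj_on_def)
  qed
  then show ?thesis unfolding first_occ_def by simp
qed

lemma vars_ordered_0_iff_first_occ:
  assumes sw: "set w = {..<k}"
  shows "vars_ordered 0 w \<longleftrightarrow> (\<forall>c. c + 1 < k \<longrightarrow> first_occ w c < first_occ w (c + 1))"
proof
  assume r: "vars_ordered 0 w"
  show "\<forall>c. c + 1 < k \<longrightarrow> first_occ w c < first_occ w (c + 1)"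
  proof (intro allI impI)
    fix c assume "c + 1 < k"
    then have p: "first_occ w (c + 1) < length w" "w ! first_occ w (c + 1) = c + 1"
      using first_occ sw by auto
    then have "c \<in> set (take (first_occ w (c + 1)) w)"
      using r unfolding vars_ordered_def by fastforce
    then obtain i where i: "i < first_occ w (c + 1)" "w!i = c" by (auto simp: in_set_conv_nth)
    then have "first_occ w c \<le> i" using first_occ_le p(1) by simp
    then show "first_occ w c < first_occ w (c + 1)" using i by simp
  qed
next
  assume a: "\<forall>c. c + 1 < k \<longrightarrow> first_occ w c < first_occ w (c + 1)"
  show "vars_ordered 0 w" unfolding vars_ordered_def
  proof (intro allI impI)
    fix i assume i: "i < length w" "0 < w!i"
    define c where "c = w!i - 1"
    have wi: "w!i = c + 1" using i(2) unfolding c_def by simp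
    have "w!i < k" using sw i(1) nth_mem by blast
    then have ck: "c + 1 < k" using wi by simp
    have "first_occ w c < first_occ w (c + 1)" using a ck by blast
    moreover have "first_occ w (c + 1) \<le> i" using first_occ_le[OF i(1) wi] .
    moreover have "first_occ w c < length w" "w ! first_occ w c = c"
      using first_occ[of c w] sw ck by auto
    ultimately show "w!i - 1 \<in> set (take i w)" unfolding c_def[symmetric]
      by (metis in_set_conv_nth length_take min_less_iff_conj nth_take order.strict_trans2)
  qed
qed

lemma pwords_no_consts_iff: "w \<in> pwords 0 n k \<longleftrightarrow> length w = n \<and> set w = {..<k} \<and> vars_ordered 0 w"
  unfolding pwords_def atLeast0LessThan by auto

definition occ_rank :: "nat list \<Rightarrow> nat \<Rightarrow> nat \<Rightarrow> nat" where
  "occ_rank w k j = card {j'. j' < k \<and> first_occ w j' < first_occ w j}"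

lemma occ_rank_mono:
  assumes "j < k" "j' < k" "first_occ w j' < first_occ w j"
  shows "occ_rank w k j' < occ_rank w k j"
proof -
  have "{x. x < k \<and> first_occ w x < first_occ w j'} \<subset> {x. x < k \<and> first_occ w x < first_occ w j}"
    using assms by auto
  then show ?thesis unfolding occ_rank_def by (rule psubset_card_mono[rotated]) simp
qed

lemma occ_rank_less:
  assumes "j < k"
  shows "occ_rank w k j < k"
proof -
  have "{x. x < k \<and> first_occ w x < first_occ w j} \<subset> {..<k}" using assms by auto
  then have "card {x. x < k \<and> first_occ w x < first_occ w j} < card {..<k}"
    by (rule psubset_card_mono[rotated]) simp
  then show ?thesis unfolding occ_rank_def by simp
qed

lemma occ_rank_less_iff:
  assumes sw: "set w = {..<k}" and "j < k" "j' < k"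
  shows "occ_rank w k j' < occ_rank w k j \<longleftrightarrow> first_occ w j' < first_occ w j"
proof
  assume a: "occ_rank w k j' < occ_rank w k j"
  show "first_occ w j' < first_occ w j"
  proof (rule ccontr)
    assume "\<not> first_occ w j' < first_occ w j"
    then consider "first_occ w j' = first_occ w j" | "first_occ w j < first_occ w j'" by linarith
    then show False
    proof cases
      case 1 then have "j' = j" using first_occ_inj[of j' w j] sw assms by auto
      then show False using a by simp
    next
      case 2 then show False using occ_rank_mono[OF assms(3,2) 2] a by simp
    qed
  qed
qed (rule occ_rank_mono[OF assms(2,3)])

lemma occ_rank_bij:
  assumes sw: "set w = {..<k}"
  shows "bij_betw (occ_rank w k) {..<k} {..<k}"
proof -
  have inj: "inj_on (occ_rank w k) {..<k}"
  proof (rule inj_onI)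
    fix x y assume xy: "x \<in> {..<k}" "y \<in> {..<k}" "occ_rank w k x = occ_rank w k y"
    have "\<not> first_occ w x < first_occ w y" using occ_rank_less_iff[OF sw, of y x] xy by simp
    moreover have "\<not> first_occ w y < first_occ w x"
      using occ_rank_less_iff[OF sw, of x y] xy by simp
    ultimately have "first_occ w x = first_occ w y" by simp
    then show "x = y" using first_occ_inj[of x w y] sw xy by auto
  qed
  have sub: "occ_rank w k ` {..<k} \<subseteq> {..<k}" using occ_rank_less by auto
  have "card (occ_rank w k ` {..<k}) = card {..<k}" using card_image[OF inj] .
  then have "occ_rank w k ` {..<k} = {..<k}" using sub by (simp add: card_subset_eq)
  then show ?thesis using inj unfolding bij_betw_def by blast
qed

definition sort_perm :: "nat list \<Rightarrow> nat \<Rightarrow> nat \<Rightarrow> nat" where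
  "sort_perm w k j = (if j < k then occ_rank w k j else j)"

lemma sort_perm_permutes:
  assumes sw: "set w = {..<k}"
  shows "sort_perm w k permutes {..<k}"
proof (rule bij_imp_permutes)
  show "bij_betw (sort_perm w k) {..<k} {..<k}"
    using occ_rank_bij[OF sw] by (rule bij_betw_cong[THEN iffD1, rotated]) (simp add: sort_perm_def)
  show "sort_perm w k x = x" if "x \<notin> {..<k}" for x using that unfolding sort_perm_def by simp
qed

lemma vars_ordered_sort_perm:
  assumes sw: "set w = {..<k}"
  shows "vars_ordered 0 (map (sort_perm w k) w)"
  unfolding vars_ordered_def
proof (intro allI impI)
  fix i assume i: "i < length (map (sort_perm w k) w)" "0 < map (sort_perm w k) w ! i"
  then have il: "i < length w" by simp
  define j where "j = w!i"
  have jk: "j < k" using il sw unfolding j_def by (metis lessThan_iff nth_mem)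
  have v: "map (sort_perm w k) w ! i = occ_rank w k j"
    using il jk unfolding j_def sort_perm_def by simp
  have "occ_rank w k j < k" using occ_rank_less[OF jk] .
  then have "occ_rank w k j - 1 < k" by simp
  then obtain j' where j': "j' < k" "occ_rank w k j' = occ_rank w k j - 1"
    using occ_rank_bij[OF sw] unfolding bij_betw_def by (metis imageE lessThan_iff)
  have "occ_rank w k j' < occ_rank w k j" using j'(2) i(2) v by simp
  then have "first_occ w j' < first_occ w j" using occ_rank_less_iff[OF sw jk j'(1)] by simp
  moreover have "first_occ w j \<le> i" using first_occ_le[OF il] unfolding j_def by simp
  ultimately have lt: "first_occ w j' < i" by simp
  have j'w: "j' \<in> set w" using sw j'(1) by simp
  have "map (sort_perm w k) w ! first_occ w j' = occ_rank w k j'"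
    using first_occ[OF j'w] j'(1) unfolding sort_perm_def by simp
  moreover have "first_occ w j' < length (take i (map (sort_perm w k) w))" using lt il by simp
  ultimately have "take i (map (sort_perm w k) w) ! first_occ w j' = occ_rank w k j'"
    using lt by simp
  then have "occ_rank w k j' \<in> set (take i (map (sort_perm w k) w))"
    using \<open>first_occ w j' < length (take i (map (sort_perm w k) w))\<close> by (metis nth_mem)
  then show "map (sort_perm w k) w ! i - 1 \<in> set (take i (map (sort_perm w k) w))"
    using j'(2) v by simp
qed

lemma sort_perm_unique:
  assumes sw: "set w = {..<k}" and q: "q permutes {..<k}" and r: "vars_ordered 0 (map q w)"
    and jk: "j < k"
  shows "q j = occ_rank w k j"
proof -
  define u where "u = map q w"
  have su: "set u = {..<k}" unfolding u_def using permutes_image[OF q] sw by simp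
  have injq: "inj_on q (set w)" using permutes_inj[OF q] by (auto simp: inj_on_def)
  have fu: "first_occ u (q x) = first_occ w x" if "x < k" for x unfolding u_def using first_occ_map[OF injq] sw that by simp
  have step: "first_occ u c < first_occ u (Suc c)" if "c \<in> {c. Suc c < k}" for c
    using r[folded u_def] that unfolding vars_ordered_0_iff_first_occ[OF su] by simp
  have mono: "first_occ u a < first_occ u b" if "a < b" "b < k" for a b
  proof (rule lift_Suc_mono_less_ivl[of "{c. Suc c < k}" "first_occ u", OF step that(1)])
    show "{a..<b} \<subseteq> {c. Suc c < k}" using that(2) by auto
  qed
  have qk: "q x < k" if "x < k" for x using permutes_in_image[OF q] that by simp
  have iff: "first_occ w x < first_occ w j \<longleftrightarrow> q x < q j" if "x < k" for x
  proof
    assume "first_occ w x < first_occ w j"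
    then have "first_occ u (q x) < first_occ u (q j)" using fu that jk by simp
    then show "q x < q j" using mono[of "q j" "q x"] qk[OF that] by (metis less_asym nat_neq_iff)
  next
    assume "q x < q j"
    then have "first_occ u (q x) < first_occ u (q j)" using mono qk[OF jk] by blast
    then show "first_occ w x < first_occ w j" using fu that jk by simp
  qed
  have "occ_rank w k j = card {x. x < k \<and> q x < q j}"
    unfolding occ_rank_def using iff by (metis (lifting))
  also have "{x. x < k \<and> q x < q j} = Hilbert_Choice.inv q ` {c. c < q j}"
  proof
    show "{x. x < k \<and> q x < q j} \<subseteq> Hilbert_Choice.inv q ` {c. c < q j}"
      using permutes_inverses(2)[OF q] by (auto intro!: image_eqI)
    show "Hilbert_Choice.inv q ` {c. c < q j} \<subseteq> {x. x < k \<and> q x < q j}"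
    proof
      fix x assume "x \<in> Hilbert_Choice.inv q ` {c. c < q j}"
      then obtain c where c: "c < q j" "x = Hilbert_Choice.inv q c" by blast
      have "c < k" using c(1) qk[OF jk] by simp
      then have "x < k" using permutes_in_image[OF permutes_inv[OF q]] c(2) by simp
      moreover have "q x = c" using permutes_inverses(1)[OF q] c(2) by simp
      ultimately show "x \<in> {x. x < k \<and> q x < q j}" using c(1) by simp
    qed
  qed
  also have "card (Hilbert_Choice.inv q ` {c. c < q j}) = card {c. c < q j}"
    by (rule card_image) (rule inj_on_subset[OF permutes_inj[OF permutes_inv[OF q]] subset_UNIV])
  finally show ?thesis by simp
qed

definition word_mat :: "nat \<Rightarrow> nat \<Rightarrow> nat list \<Rightarrow> nat mat" where
  "word_mat n k w = mat n k (\<lambda>(i,j). if w!i = j then 1 else 0)"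

lemma dim_word_mat[simp]: "dim_row (word_mat n k w) = n" "dim_col (word_mat n k w) = k"
  unfolding word_mat_def by auto

lemma index_word_mat: "i < n \<Longrightarrow> j < k \<Longrightarrow> word_mat n k w $$ (i,j) = (if w!i = j then 1 else 0)"
  unfolding word_mat_def by simp

lemma col_set_word_mat: "j < k \<Longrightarrow> col_set (word_mat n k w) j = {i. i < n \<and> w!i = j}"
  unfolding col_set_def by (auto simp: index_word_mat split: if_splits)

lemma Min_col_set_word_mat:
  assumes "length w = n" "j \<in> set w" "j < k"
  shows "Min (col_set (word_mat n k w) j) = first_occ w j"
proof (rule Min_eqI)
  show "finite (col_set (word_mat n k w) j)" unfolding col_set_word_mat[OF assms(3)] by auto
  show "first_occ w j \<in> col_set (word_mat n k w) j"
    unfolding col_set_word_mat[OF assms(3)] using first_occ[OF assms(2)] assms(1) by auto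
  show "first_occ w j \<le> y" if "y \<in> col_set (word_mat n k w) j" for y
    using that unfolding col_set_word_mat[OF assms(3)] using first_occ_le assms(1) by auto
qed

lemma word_mat_Mba:
  assumes "length w = n" "set w = {..<k}"
  shows "word_mat n k w \<in> Mba n k"
proof -
  have "word_mat n k w \<in> carrier_mat n k" by auto
  moreover have "\<forall>i<n. \<forall>j<k. word_mat n k w $$ (i, j) \<in> {0, 1}" by (auto simp: index_word_mat)
  moreover have "\<forall>j<k. col_set (word_mat n k w) j \<noteq> {}"
  proof (intro allI impI)
    fix j assume j: "j < k"
    then have "j \<in> set w" using assms(2) by auto
    then show "col_set (word_mat n k w) j \<noteq> {}"
      unfolding col_set_word_mat[OF j] using first_occ[of j w] assms(1) by auto
  qed
  moreover have "\<forall>j<k. \<forall>j'<k. j \<noteq> j' \<longrightarrow> col_set (word_mat n k w) j \<inter> col_set (word_mat n k w) j' = {}"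
    by (auto simp: col_set_word_mat)
  moreover have "(\<Union>j<k. col_set (word_mat n k w) j) = {..<n}"
  proof
    show "(\<Union>j<k. col_set (word_mat n k w) j) \<subseteq> {..<n}" by (auto simp: col_set_word_mat)
    show "{..<n} \<subseteq> (\<Union>j<k. col_set (word_mat n k w) j)"
    proof
      fix i assume "i \<in> {..<n}"
      then have i: "i < n" by simp
      then have "w!i \<in> set w" using assms(1) by simp
      then have "w!i < k" using assms(2) by auto
      then show "i \<in> (\<Union>j<k. col_set (word_mat n k w) j)" using i by (auto simp: col_set_word_mat)
    qed
  qed
  ultimately show ?thesis unfolding Mba_def by blast
qed

lemma Mba_word_mat:
  assumes A: "A \<in> Mba n k"
  shows "\<exists>w. length w = n \<and> set w = {..<k} \<and> A = word_mat n k w"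
proof -
  have car: "A \<in> carrier_mat n k" and ent: "\<forall>i<n. \<forall>j<k. A $$ (i, j) \<in> {0, 1}"
    and ne: "\<forall>j<k. col_set A j \<noteq> {}"
    and dis: "\<forall>j<k. \<forall>j'<k. j \<noteq> j' \<longrightarrow> col_set A j \<inter> col_set A j' = {}"
    and un: "(\<Union>j<k. col_set A j) = {..<n}" using A unfolding Mba_def by auto
  have dr: "dim_row A = n" "dim_col A = k" using car by auto
  have ex: "\<exists>j. j < k \<and> A $$ (i,j) = 1" if "i < n" for i
  proof -
    have "i \<in> (\<Union>j<k. col_set A j)" using un that by auto
    then show ?thesis unfolding col_set_def by auto
  qed
  define w where "w = map (\<lambda>i. SOME j. j < k \<and> A $$ (i,j) = 1) [0..<n]"
  have wi: "w!i < k \<and> A $$ (i, w!i) = 1" if "i < n" for i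
    unfolding w_def using someI_ex[OF ex[OF that]] that by simp
  have uniq: "j = w!i" if "i < n" "j < k" "A $$ (i,j) = 1" for i j
  proof (rule ccontr)
    assume "j \<noteq> w!i"
    then have "col_set A j \<inter> col_set A (w!i) = {}" using dis that(2) wi[OF that(1)] by blast
    moreover have "i \<in> col_set A j" "i \<in> col_set A (w!i)"
      unfolding col_set_def using that wi[OF that(1)] dr by auto
    ultimately show False by blast
  qed
  have lw: "length w = n" unfolding w_def by simp
  have "set w = {..<k}"
  proof
    show "set w \<subseteq> {..<k}" using wi lw by (auto simp: in_set_conv_nth)
    show "{..<k} \<subseteq> set w"
    proof
      fix j assume "j \<in> {..<k}"
      then have j: "j < k" by simp
      then obtain i where "i \<in> col_set A j" using ne by blast
      then have i: "i < n" "A $$ (i,j) = 1" unfolding col_set_def using dr by auto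
      then have "j = w!i" using uniq j by blast
      then show "j \<in> set w" using i lw by simp
    qed
  qed
  moreover have "A = word_mat n k w"
  proof (rule eq_matI)
    fix i j assume "i < dim_row (word_mat n k w)" "j < dim_col (word_mat n k w)"
    then have ij: "i < n" "j < k" by auto
    show "A $$ (i, j) = word_mat n k w $$ (i, j)"
    proof (cases "w!i = j")
      case True then show ?thesis using wi[OF ij(1)] ij by (simp add: index_word_mat)
    next
      case False
      then have "A $$ (i,j) \<noteq> 1" using uniq ij by blast
      then have "A $$ (i,j) = 0" using ent ij by auto
      then show ?thesis using False ij by (simp add: index_word_mat)
    qed
  qed (use dr in auto)
  ultimately show ?thesis using lw by blast
qed

lemma word_mat_Moba_iff:
  assumes lw: "length w = n" and sw: "set w = {..<k}"
  shows "word_mat n k w \<in> Moba n k \<longleftrightarrow> vars_ordered 0 w"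
proof -
  have "Min (col_set (word_mat n k w) c) = first_occ w c" if "c < k" for c
    using Min_col_set_word_mat[OF lw _ that] sw that by auto
  then show ?thesis
    unfolding Moba_def vars_ordered_0_iff_first_occ[OF sw] using word_mat_Mba[OF lw sw] by auto
qed

lemma word_mat_mult:
  assumes "length f = n" "set f \<subseteq> {..<m}" "length g = m"
  shows "word_mat n m f * word_mat m k g = word_mat n k (map (\<lambda>x. g!x) f)"
proof (rule eq_matI)
  fix i j assume "i < dim_row (word_mat n k (map (\<lambda>x. g!x) f))" "j < dim_col (word_mat n k (map (\<lambda>x. g!x) f))"
  then have ij: "i < n" "j < k" by auto
  have "f!i \<in> set f" using ij assms(1) by simp
  then have fi: "f!i < m" using assms(2) by auto
  have "(word_mat n m f * word_mat m k g) $$ (i, j) = (\<Sum>l\<in>{0..<m}. (if f!i = l then 1 else 0) * (if g!l = j then 1 else 0))"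
    using ij by (simp add: scalar_prod_def index_word_mat)
  also have "\<dots> = (\<Sum>l\<in>{0..<m}. if f!i = l then (if g!l = j then 1 else 0) else 0)"
    by (rule sum.cong) auto
  also have "\<dots> = (if g!(f!i) = j then 1 else 0)" using fi by (simp add: sum.delta)
  also have "\<dots> = word_mat n k (map (\<lambda>x. g!x) f) $$ (i, j)"
    using ij assms by (simp add: index_word_mat)
  finally show "(word_mat n m f * word_mat m k g) $$ (i, j) = word_mat n k (map (\<lambda>x. g!x) f) $$ (i, j)" .
qed auto

lemma pcomp_no_consts: "pcomp 0 f g = map (\<lambda>x. g!x) f"
  unfolding pcomp_def by simp

lemma perm_mat_word_mat: "perm_mat k p = word_mat k k (map p [0..<k])"
  unfolding perm_mat_def word_mat_def by (rule eq_matI) auto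

lemma word_mat_mult_perm_mat:
  assumes "length w = n" "set w \<subseteq> {..<k}"
  shows "word_mat n k w * perm_mat k q = word_mat n k (map q w)"
proof -
  have "word_mat n k w * perm_mat k q = word_mat n k (map (\<lambda>x. map q [0..<k] ! x) w)"
    unfolding perm_mat_word_mat using word_mat_mult[of w n k "map q [0..<k]" k] assms by simp
  also have "map (\<lambda>x. map q [0..<k] ! x) w = map q w" using assms(2) by (auto intro!: map_cong)
  finally show ?thesis .
qed

lemma transpose_perm_mat:
  assumes "p permutes {..<k}"
  shows "transpose_mat (perm_mat k p) = perm_mat k (Hilbert_Choice.inv p)"
proof (rule eq_matI)
  fix i j assume "i < dim_row (perm_mat k (Hilbert_Choice.inv p))" "j < dim_col (perm_mat k (Hilbert_Choice.inv p))"
  then have ij: "i < k" "j < k" unfolding perm_mat_def by auto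
  have "(p j = i) = (Hilbert_Choice.inv p i = j)" using permutes_inv_eq[OF assms] by metis
  then show "transpose_mat (perm_mat k p) $$ (i, j) = perm_mat k (Hilbert_Choice.inv p) $$ (i, j)"
    using ij unfolding perm_mat_def by simp
qed (auto simp: perm_mat_def)

lemma piM_word_mat:
  assumes lw: "length w = m" and sw: "set w = {..<k}"
  shows "\<exists>p. p permutes {..<k} \<and> piM (word_mat m k w) = perm_mat k p \<and> map p w \<in> pwords 0 m k"
proof -
  define p0 where "p0 = sort_perm w k"
  have p0: "p0 permutes {..<k}" unfolding p0_def using sort_perm_permutes[OF sw] .
  have prod: "word_mat m k w * perm_mat k q = word_mat m k (map q w)" for q using word_mat_mult_perm_mat[of w m k q] lw sw by simp
  have setq: "set (map q w) = {..<k}" if "q permutes {..<k}" for q using permutes_image[OF that] sw by simp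
  have r0: "vars_ordered 0 (map p0 w)" unfolding p0_def using vars_ordered_sort_perm[OF sw] .
  have good: "perm_mat k p0 \<in> Sk k \<and> word_mat m k w * perm_mat k p0 \<in> Moba m k"
  proof
    show "perm_mat k p0 \<in> Sk k" unfolding Sk_def using p0 by blast
    show "word_mat m k w * perm_mat k p0 \<in> Moba m k" unfolding prod
      using word_mat_Moba_iff[of "map p0 w" m k] lw setq[OF p0] r0 by simp
  qed
  have uniq: "P = perm_mat k p0" if PP: "P \<in> Sk k \<and> word_mat m k w * P \<in> Moba m k" for P
  proof -
    obtain q where q: "P = perm_mat k q" "q permutes {..<k}" using PP unfolding Sk_def by blast
    have "word_mat m k (map q w) \<in> Moba m k" using PP q(1) prod by simp
    then have "vars_ordered 0 (map q w)"
      using word_mat_Moba_iff[of "map q w" m k] lw setq[OF q(2)] by simp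
    then have "q j = p0 j" if "j < k" for j using sort_perm_unique[OF sw q(2) _ that] that unfolding p0_def sort_perm_def by simp
    then have e: "map q [0..<k] = map p0 [0..<k]" by simp
    show ?thesis unfolding q(1) perm_mat_word_mat e ..
  qed
  have "piM (word_mat m k w) = perm_mat k p0" unfolding piM_def dim_word_mat
    by (rule the_equality) (use good uniq in blast)+
  moreover have "map p0 w \<in> pwords 0 m k"
    unfolding pwords_no_consts_iff using lw setq[OF p0] r0 by simp
  ultimately show ?thesis using p0 by blast
qed

lemma word_mat_transpose_Mba:
  assumes lw: "length w = n" and sw: "set w = {..<k}" and P: "P \<in> Sk k"
  shows "word_mat n k w * transpose_mat P \<in> Mba n k"
proof -
  obtain p where p: "P = perm_mat k p" "p permutes {..<k}" using P unfolding Sk_def by blast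
  have "word_mat n k w * transpose_mat P = word_mat n k (map (Hilbert_Choice.inv p) w)"
    unfolding p(1) transpose_perm_mat[OF p(2)] using word_mat_mult_perm_mat[of w n k] lw sw by simp
  moreover have "set (map (Hilbert_Choice.inv p) w) = {..<k}"
    using permutes_image[OF permutes_inv[OF p(2)]] sw by simp
  ultimately show ?thesis using word_mat_Mba[of "map (Hilbert_Choice.inv p) w" n k] lw by simp
qed

lemma finite_Sk: "finite (Sk k)"
proof -
  have "Sk k = perm_mat k ` {p. p permutes {..<k}}" unfolding Sk_def by auto
  then show ?thesis using finite_permutations[of "{..<k}"] by simp
qed

lemma word_mat_mult_Mba:
  assumes f: "f \<in> pwords 0 n m" and B: "B \<in> Mba m k"
  obtains g where "g \<in> pwords 0 m k" "piM B \<in> Sk k"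
    "word_mat n m f * B = word_mat n k (pcomp 0 f g) * transpose_mat (piM B)"
proof -
  obtain w where w: "length w = m" "set w = {..<k}" "B = word_mat m k w"
    using Mba_word_mat[OF B] by blast
  obtain p where p: "p permutes {..<k}" "piM B = perm_mat k p" "map p w \<in> pwords 0 m k"
    using piM_word_mat[OF w(1,2)] w(3) by blast
  have lf: "length f = n" and sf: "set f = {..<m}" using f unfolding pwords_no_consts_iff by auto
  have "set (pcomp 0 f (map p w)) \<subseteq> {..<k}"
    using pcomp_pwords[OF f p(3)] unfolding pwords_no_consts_iff by auto
  then have "word_mat n k (pcomp 0 f (map p w)) * transpose_mat (piM B) =
      word_mat n k (map (Hilbert_Choice.inv p) (pcomp 0 f (map p w)))"
    unfolding p(2) transpose_perm_mat[OF p(1)] using word_mat_mult_perm_mat lf by simp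
  also have "map (Hilbert_Choice.inv p) (pcomp 0 f (map p w)) = map (\<lambda>x. w!x) f"
    unfolding pcomp_no_consts using sf w(1,2) permutes_inverses(2)[OF p(1)] by (auto intro!: map_cong)
  also have "word_mat n k \<dots> = word_mat n m f * B"
    unfolding w(3) using word_mat_mult[of f n m w k] lf sf w(1) by simp
  finally have eq: "word_mat n k (pcomp 0 f (map p w)) * transpose_mat (piM B) = word_mat n m f * B" .
  have "piM B \<in> Sk k" unfolding p(2) Sk_def using p(1) by blast
  from that[OF p(3) this eq[symmetric]] show ?thesis .
qed

lemma obtain_const_in:
  assumes "\<forall>x\<in>A. h x = c" "h ` A \<subseteq> C" "C \<noteq> {}"
  obtains c' where "c' \<in> C" "\<forall>x\<in>A. h x = c'"
  using assms by (cases "A = {}") auto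

lemma word_mat_colours_constant:
  assumes "0 < r"
  shows "\<exists>n. \<forall>c::nat mat \<Rightarrow> nat. (\<forall>A\<in>Mba n k. c A < r) \<longrightarrow> (\<exists>f\<in>pwords 0 n m.
     \<exists>ch\<in>Sk k \<rightarrow>\<^sub>E {..<r}. \<forall>g\<in>pwords 0 m k. \<forall>P\<in>Sk k. c (word_mat n k (pcomp 0 f g) * transpose_mat P) = ch P)"
proof -
  define C where "C = Sk k \<rightarrow>\<^sub>E {..<r}"
  have C: "finite C" "C \<noteq> {}"
    unfolding C_def using finite_Sk assms by (auto simp: finite_PiE PiE_eq_empty_iff)
  obtain n where n: "\<forall>\<chi>. \<chi> ` pwords 0 n k \<subseteq> C \<longrightarrow> (\<exists>f\<in>pwords 0 n m. \<exists>c. \<forall>g\<in>pwords 0 m k. \<chi> (pcomp 0 f g) = c)"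
    using GR_finite_colours[OF graham_rothschild C(1)] by blast
  show ?thesis
  proof (intro exI[of _ n] allI impI)
    fix c :: "nat mat \<Rightarrow> nat" assume c: "\<forall>A\<in>Mba n k. c A < r"
    define \<chi> where "\<chi> w = (\<lambda>P\<in>Sk k. c (word_mat n k w * transpose_mat P))" for w
    have \<chi>: "\<chi> ` pwords 0 n k \<subseteq> C"
    proof (intro image_subsetI)
      fix w assume "w \<in> pwords 0 n k"
      then have "word_mat n k w * transpose_mat P \<in> Mba n k" if "P \<in> Sk k" for P
        using word_mat_transpose_Mba that unfolding pwords_no_consts_iff by blast
      then show "\<chi> w \<in> C" using c unfolding \<chi>_def C_def by auto
    qed
    then obtain f ch0 where f: "f \<in> pwords 0 n m" and ch0: "\<forall>g\<in>pwords 0 m k. \<chi> (pcomp 0 f g) = ch0"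
      using n[THEN spec, of \<chi>] by blast
    have "(\<lambda>g. \<chi> (pcomp 0 f g)) ` pwords 0 m k \<subseteq> C" using \<chi> pcomp_pwords[OF f] by blast
    then obtain ch where "ch \<in> C" "\<forall>g\<in>pwords 0 m k. \<chi> (pcomp 0 f g) = ch"
      using obtain_const_in[OF ch0 _ C(2)] by blast
    then show "\<exists>f\<in>pwords 0 n m. \<exists>ch\<in>Sk k \<rightarrow>\<^sub>E {..<r}. \<forall>g\<in>pwords 0 m k. \<forall>P\<in>Sk k.
        c (word_mat n k (pcomp 0 f g) * transpose_mat P) = ch P"
      using f unfolding C_def \<chi>_def by force
  qed
qed

theorem theorem5p2:
  fixes k m r :: nat
  shows "\<exists>n::nat. \<forall>c :: nat mat \<Rightarrow> nat. (\<forall>A \<in> Mba n k. c A < r) \<longrightarrow>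
     (\<exists>R \<in> Moba n m. \<exists>ch :: nat mat \<Rightarrow> nat. (\<forall>P \<in> Sk k. ch P < r) \<and>
        (\<forall>B \<in> Mba m k. c (R * B) = ch (piM B)))"
proof (cases "r = 0")
  case True
  have "word_mat k k (var_word 0 k) \<in> Mba k k"
    using var_word_pwords[of 0 k] unfolding pwords_no_consts_iff by (auto intro: word_mat_Mba)
  then show ?thesis using True by blast
next
  case False
  then obtain n where n: "\<forall>c::nat mat \<Rightarrow> nat. (\<forall>A\<in>Mba n k. c A < r) \<longrightarrow> (\<exists>f\<in>pwords 0 n m.
     \<exists>ch\<in>Sk k \<rightarrow>\<^sub>E {..<r}. \<forall>g\<in>pwords 0 m k. \<forall>P\<in>Sk k. c (word_mat n k (pcomp 0 f g) * transpose_mat P) = ch P)"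
    using word_mat_colours_constant by blast
  show ?thesis
  proof (intro exI[of _ n] allI impI)
    fix c :: "nat mat \<Rightarrow> nat" assume "\<forall>A\<in>Mba n k. c A < r"
    then obtain f ch where f: "f \<in> pwords 0 n m" and ch: "ch \<in> Sk k \<rightarrow>\<^sub>E {..<r}"
      "\<forall>g\<in>pwords 0 m k. \<forall>P\<in>Sk k. c (word_mat n k (pcomp 0 f g) * transpose_mat P) = ch P"
      using n by blast
    have "c (word_mat n m f * B) = ch (piM B)" if "B \<in> Mba m k" for B
      using word_mat_mult_Mba[OF f that] ch(2) by metis
    moreover have "word_mat n m f \<in> Moba n m"
      using f word_mat_Moba_iff unfolding pwords_no_consts_iff by blast
    ultimately show "\<exists>R\<in>Moba n m. \<exists>ch. (\<forall>P\<in>Sk k. ch P < r) \<and> (\<forall>B\<in>Mba m k. c (R * B) = ch (piM B))"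
      using ch(1) by auto
  qed
qed

end
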